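(* Let $\kappa,u_0\in\mathbb{R}$ and let $f(\zeta,u)$ be a complex function on a connected open set $U\subset\mathbb{C}_\zeta\times\{u>u_0\}$, jointly smooth and holomorphic in $\zeta$, with $f_{,\zeta\zeta}\neq0$ and $f_{,\zeta\zeta\zeta}\neq0$ on $U$. Put $\phi=(\ln f_{,\zeta\zeta})_{,\zeta}$ and $\psi=(\ln f_{,\zeta\zeta})_{,u}$. Then $$\left((u-u_0)\frac{\psi}{\phi}\right)_{,\zeta}=\left(\frac{2i\kappa-2}{\phi}\right)_{,\zeta}+i\kappa\quad\text{on }U$$ if and only if, near every point of $U$, $$f(\zeta,u)=\frac{1}{(u-u_0)^2}\,\mathrm{f}\big(\zeta(u-u_0)^{i\kappa}-h(u)\big)+A_1(u)\zeta+A_0(u)$$ for some holomorphic function $\mathrm{f}$ of one complex variable with $\mathrm{f}'''\neq0$ and smooth complex functions $h,A_1,A_0$ of $u$, where $(u-u_0)^{i\kappa}=e^{i\kappa\ln(u-u_0)}$.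
   Context: Subscripts after a comma denote partial derivatives; $\zeta$ is a complex variable and $u$ a real variable; primes denote derivatives of $\mathrm{f}$ with respect to its argument. *)

theory Defs
  imports "HOL-Analysis.Analysis"
begin

primrec iter_dderiv :: "('a::real_normed_vector \<Rightarrow> 'b::real_normed_vector) \<Rightarrow> 'a list \<Rightarrow> 'a \<Rightarrow> 'b" where
  "iter_dderiv g [] = g"
| "iter_dderiv g (v # vs) = (\<lambda>x. frechet_derivative (iter_dderiv g vs) (at x) v)"

definition smooth_on :: "'a::real_normed_vector set \<Rightarrow> ('a \<Rightarrow> 'b::real_normed_vector) \<Rightarrow> bool" where
  "smooth_on S g \<longleftrightarrow> open S \<and>
     (\<forall>vs. continuous_on S (iter_dderiv g vs) \<and> (\<forall>x\<in>S. iter_dderiv g vs differentiable (at x)))"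

definition fzz :: "(complex \<Rightarrow> real \<Rightarrow> complex) \<Rightarrow> complex \<Rightarrow> real \<Rightarrow> complex" where
  "fzz f z u = (deriv ^^ 2) (\<lambda>w. f w u) z"

definition fzzz :: "(complex \<Rightarrow> real \<Rightarrow> complex) \<Rightarrow> complex \<Rightarrow> real \<Rightarrow> complex" where
  "fzzz f z u = (deriv ^^ 3) (\<lambda>w. f w u) z"

text \<open>phi = (ln f_zz)_z and psi = (ln f_zz)_u, written as logarithmic derivatives.\<close>
definition phi :: "(complex \<Rightarrow> real \<Rightarrow> complex) \<Rightarrow> complex \<Rightarrow> real \<Rightarrow> complex" where
  "phi f z u = deriv (\<lambda>w. fzz f w u) z / fzz f z u"

definition psi :: "(complex \<Rightarrow> real \<Rightarrow> complex) \<Rightarrow> complex \<Rightarrow> real \<Rightarrow> complex" where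
  "psi f z u = vector_derivative (\<lambda>t. fzz f z t) (at u) / fzz f z u"

definition cpow_ik :: "real \<Rightarrow> real \<Rightarrow> real \<Rightarrow> complex" where
  "cpow_ik \<kappa> u0 u = exp (\<i> * of_real (\<kappa> * ln (u - u0)))"

end

theory Submission
  imports Defs "HOL-Complex_Analysis.Complex_Analysis"
begin

text \<open>
  Write \<open>g = f\<^sub>,\<^sub>\<zeta>\<^sub>\<zeta>\<close>, so that \<open>\<phi> = g\<^sub>,\<^sub>\<zeta> / g\<close> and \<open>\<psi> = g\<^sub>,\<^sub>u / g\<close>. Multiplying
  \<open>(u - u\<^sub>0) \<psi>/\<phi> - (2i\<kappa> - 2)/\<phi> - i\<kappa>\<zeta>\<close> by \<open>g\<^sub>,\<^sub>\<zeta>\<close> gives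
  \<open>(u - u\<^sub>0) g\<^sub>,\<^sub>u - (2i\<kappa> - 2) g - i\<kappa>\<zeta> g\<^sub>,\<^sub>\<zeta>\<close>, so the equation says that this bracket is a
  function \<open>-c\<^sub>0(u)\<close> of \<open>u\<close> alone, i.e. that \<open>g\<close> solves the transport equation
  \<open>(u - u\<^sub>0) g\<^sub>,\<^sub>u = (2i\<kappa> - 2) g + (i\<kappa>\<zeta> - c\<^sub>0(u)) g\<^sub>,\<^sub>\<zeta>\<close>. Along the characteristics
  \<open>\<zeta> (u - u\<^sub>0)\<^sup>i\<^sup>\<kappa> - h(u) = const\<close>, where \<open>h' = (u - u\<^sub>0)\<^sup>i\<^sup>\<kappa> c\<^sub>0 / (u - u\<^sub>0)\<close>, the
  quantity \<open>(u - u\<^sub>0)\<^sup>2 (u - u\<^sub>0)\<^sup>-\<^sup>2\<^sup>i\<^sup>\<kappa> g\<close> is constant, so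
  \<open>g = (u - u\<^sub>0)\<^sup>2\<^sup>i\<^sup>\<kappa>\<^sup>-\<^sup>2 T(\<zeta> (u - u\<^sub>0)\<^sup>i\<^sup>\<kappa> - h(u))\<close>, and integrating twice in \<open>\<zeta>\<close> gives
  the local form with \<open>f'' = T\<close>. Conversely, for the local form one computes
  \<open>\<phi> = (u - u\<^sub>0)\<^sup>i\<^sup>\<kappa> f'''/f''\<close> and
  \<open>(u - u\<^sub>0) \<psi> = 2i\<kappa> - 2 + (i\<kappa>\<zeta> (u - u\<^sub>0)\<^sup>i\<^sup>\<kappa> - (u - u\<^sub>0) h') f'''/f''\<close>, from which the equation
  follows by differentiating in \<open>\<zeta>\<close>. Smoothness of \<open>h\<close>, \<open>A\<^sub>1\<close>, \<open>A\<^sub>0\<close> holds because \<open>\<zeta>\<close>- and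
  \<open>u\<close>-derivatives of a jointly smooth function that is holomorphic in \<open>\<zeta>\<close> are again of this kind.
\<close>

section \<open>Smooth functions of one real variable\<close>

definition vderiv :: "(real \<Rightarrow> 'a::real_normed_vector) \<Rightarrow> real \<Rightarrow> 'a" where
  "vderiv g = (\<lambda>x. vector_derivative g (at x))"

fun Ck_on :: "nat \<Rightarrow> real set \<Rightarrow> (real \<Rightarrow> 'a::real_normed_vector) \<Rightarrow> bool" where
  "Ck_on 0 S g \<longleftrightarrow> True"
| "Ck_on (Suc n) S g \<longleftrightarrow> (\<forall>x\<in>S. g differentiable (at x)) \<and> Ck_on n S (vderiv g)"

definition Cinf_on :: "real set \<Rightarrow> (real \<Rightarrow> 'a::real_normed_vector) \<Rightarrow> bool" where
  "Cinf_on S g \<longleftrightarrow> (\<forall>n. Ck_on n S g)"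

lemma vderiv_at: "(g has_vector_derivative g') (at x) \<Longrightarrow> vderiv g x = g'"
  by (simp add: vderiv_def vector_derivative_at)

lemma has_vector_derivative_vderiv: "g differentiable (at x) \<Longrightarrow> (g has_vector_derivative vderiv g x) (at x)"
  by (simp add: vderiv_def vector_derivative_works)

lemma vderiv_cong_open:
  "open S \<Longrightarrow> (\<And>x. x \<in> S \<Longrightarrow> f x = g x) \<Longrightarrow> x \<in> S \<Longrightarrow> vderiv f x = vderiv g x"
  unfolding vderiv_def
  by (rule vector_derivative_cong_eq[where A=UNIV and B=UNIV, simplified])
     (auto simp: eventually_nhds intro!: exI[of _ S])

lemma Ck_on_cong_open:
  "open S \<Longrightarrow> (\<And>x. x \<in> S \<Longrightarrow> f x = g x) \<Longrightarrow> Ck_on n S f \<Longrightarrow> Ck_on n S g"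
proof (induction n arbitrary: f g)
  case (Suc n)
  have "g differentiable (at x)" if x: "x \<in> S" for x
  proof -
    obtain D where "(f has_derivative D) (at x)"
      using Suc.prems(3) x by (auto simp: differentiable_def)
    then have "(g has_derivative D) (at x)"
      by (rule has_derivative_transform_within_open[OF _ \<open>open S\<close> x]) (use Suc.prems in auto)
    then show ?thesis unfolding differentiable_def by blast
  qed
  moreover have "Ck_on n S (vderiv g)"
    using Suc.IH[of "vderiv f" "vderiv g"] Suc.prems vderiv_cong_open[of S f g] by auto
  ultimately show ?case by simp
qed simp

lemma Ck_on_Suc_imp: "Ck_on (Suc n) S g \<Longrightarrow> Ck_on n S g"
  by (induction n arbitrary: g) auto

lemma Ck_on_SucI:
  assumes "open S" "\<And>x. x \<in> S \<Longrightarrow> (g has_vector_derivative g' x) (at x)" "Ck_on n S g'"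
  shows "Ck_on (Suc n) S g"
proof -
  have "\<forall>x\<in>S. g differentiable (at x)"
    using assms(2) by (auto simp: differentiable_def has_vector_derivative_def)
  moreover have "Ck_on n S (vderiv g)"
    using Ck_on_cong_open[OF assms(1) _ assms(3), of "vderiv g"] assms(2) vderiv_at by metis
  ultimately show ?thesis by simp
qed

lemma Ck_on_subset: "Ck_on n S g \<Longrightarrow> T \<subseteq> S \<Longrightarrow> Ck_on n T g"
  by (induction n arbitrary: g) auto

lemma Ck_on_const: "open S \<Longrightarrow> Ck_on n S (\<lambda>x. c)"
proof (induction n arbitrary: c)
  case (Suc n) then show ?case
    by (intro Ck_on_SucI[of S _ "\<lambda>x. 0"]) (auto intro!: derivative_eq_intros)
qed simp

lemma Ck_on_ident: "open S \<Longrightarrow> Ck_on n S (\<lambda>x::real. x)"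
proof (cases n)
  case (Suc m) assume "open S" then show ?thesis unfolding Suc
    by (intro Ck_on_SucI[of S _ "\<lambda>x. 1"] Ck_on_const) (auto intro!: derivative_eq_intros)
qed simp

lemma Ck_on_add:
  fixes f g :: "real \<Rightarrow> 'a::real_normed_vector"
  shows "open S \<Longrightarrow> Ck_on n S f \<Longrightarrow> Ck_on n S g \<Longrightarrow> Ck_on n S (\<lambda>x. f x + g x)"
proof (induction n arbitrary: f g)
  case (Suc n)
  then show ?case
    by (intro Ck_on_SucI[of S _ "\<lambda>x. vderiv f x + vderiv g x"])
       (auto intro!: has_vector_derivative_add has_vector_derivative_vderiv)
qed simp

lemma Ck_on_bounded_linear:
  fixes f :: "real \<Rightarrow> 'a::real_normed_vector"
  assumes L: "bounded_linear L"
  shows "open S \<Longrightarrow> Ck_on n S f \<Longrightarrow> Ck_on n S (\<lambda>x. L (f x))"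
proof (induction n arbitrary: f)
  case (Suc n)
  then show ?case
    by (intro Ck_on_SucI[of S _ "\<lambda>x. L (vderiv f x)"])
       (auto intro!: bounded_linear.has_vector_derivative[OF L] has_vector_derivative_vderiv)
qed simp

lemma Ck_on_mult:
  fixes f g :: "real \<Rightarrow> 'a::real_normed_algebra"
  shows "open S \<Longrightarrow> Ck_on n S f \<Longrightarrow> Ck_on n S g \<Longrightarrow> Ck_on n S (\<lambda>x. f x * g x)"
proof (induction n arbitrary: f g)
  case (Suc n)
  have "Ck_on n S f" "Ck_on n S g"
    using Suc.prems(2,3) by (metis Ck_on_Suc_imp)+
  then have "Ck_on n S (\<lambda>x. f x * vderiv g x + vderiv f x * g x)"
    using Suc by (intro Ck_on_add Suc.IH) auto
  then show ?case
    using Suc by (intro Ck_on_SucI[of S _ "\<lambda>x. f x * vderiv g x + vderiv f x * g x"])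
      (auto intro!: has_vector_derivative_mult has_vector_derivative_vderiv)
qed simp

lemma Ck_on_scaleR:
  fixes f :: "real \<Rightarrow> real" and g :: "real \<Rightarrow> 'a::real_normed_vector"
  shows "open S \<Longrightarrow> Ck_on n S f \<Longrightarrow> Ck_on n S g \<Longrightarrow> Ck_on n S (\<lambda>x. f x *\<^sub>R g x)"
proof (induction n arbitrary: f g)
  case (Suc n)
  have "Ck_on n S f" "Ck_on n S g"
    using Suc.prems(2,3) by (metis Ck_on_Suc_imp)+
  then have ck: "Ck_on n S (\<lambda>x. f x *\<^sub>R vderiv g x + vderiv f x *\<^sub>R g x)"
    using Suc by (intro Ck_on_add Suc.IH) auto
  have der: "((\<lambda>x. f x *\<^sub>R g x) has_vector_derivative f x *\<^sub>R vderiv g x + vderiv f x *\<^sub>R g x) (at x)"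
    if "x \<in> S" for x
    using Suc.prems that
    by (auto intro!: has_vector_derivative_scaleR has_vector_derivative_vderiv
        simp: has_real_derivative_iff_has_vector_derivative)
  show ?case by (rule Ck_on_SucI[OF Suc.prems(1) der ck])
qed simp

lemma Ck_on_holomorphic_comp:
  fixes f :: "real \<Rightarrow> complex"
  shows "open S \<Longrightarrow> open T \<Longrightarrow> g holomorphic_on T \<Longrightarrow> (\<And>x. x \<in> S \<Longrightarrow> f x \<in> T)
     \<Longrightarrow> Ck_on n S f \<Longrightarrow> Ck_on n S (\<lambda>x. g (f x))"
proof (induction n arbitrary: f g)
  case (Suc n)
  have "Ck_on n S f"
    using Suc.prems(5) by (metis Ck_on_Suc_imp)
  then have ck: "Ck_on n S (\<lambda>x. vderiv f x * deriv g (f x))"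
    using Suc holomorphic_deriv by (intro Ck_on_mult Suc.IH[of "deriv g" f]) auto
  have der: "((\<lambda>x. g (f x)) has_vector_derivative vderiv f x * deriv g (f x)) (at x)"
    if x: "x \<in> S" for x
  proof -
    have "(f has_vector_derivative vderiv f x) (at x)"
      using Suc x by (auto intro: has_vector_derivative_vderiv)
    moreover have "(g has_field_derivative deriv g (f x)) (at (f x))"
      using Suc x by (metis DERIV_deriv_iff_field_differentiable holomorphic_on_imp_differentiable_at)
    ultimately show ?thesis using field_vector_diff_chain_at unfolding o_def by blast
  qed
  show ?case by (rule Ck_on_SucI[OF Suc.prems(1) der ck])
qed simp

lemma Cinf_on_from_derivative:
  assumes "open S" "\<And>x. x \<in> S \<Longrightarrow> (g has_vector_derivative g' x) (at x)" "Cinf_on S g'"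
  shows "Cinf_on S g"
  unfolding Cinf_on_def
proof
  fix n
  have "Ck_on (Suc n) S g"
    using Ck_on_SucI[OF assms(1,2)] assms(3) unfolding Cinf_on_def by blast
  then show "Ck_on n S g" by (rule Ck_on_Suc_imp)
qed

lemma Cinf_on_vderiv: "Cinf_on S g \<Longrightarrow> Cinf_on S (vderiv g)"
  unfolding Cinf_on_def using Ck_on.simps(2) by blast

lemma Cinf_on_has_vector_derivative:
  "Cinf_on S g \<Longrightarrow> x \<in> S \<Longrightarrow> (g has_vector_derivative vderiv g x) (at x)"
  unfolding Cinf_on_def using Ck_on.simps(2) has_vector_derivative_vderiv by blast

lemma Cinf_on_imp_continuous_on:
  assumes "Cinf_on S g" shows "continuous_on S g"
proof -
  have "isCont g x" if "x \<in> S" for x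
    using Cinf_on_has_vector_derivative[OF assms that] by (rule has_vector_derivative_continuous)
  then show ?thesis by (simp add: continuous_at_imp_continuous_on)
qed

lemma Cinf_on_cong_open:
  "open S \<Longrightarrow> (\<And>x. x \<in> S \<Longrightarrow> f x = g x) \<Longrightarrow> Cinf_on S f \<Longrightarrow> Cinf_on S g"
  unfolding Cinf_on_def using Ck_on_cong_open[of S f g] by blast

lemma Cinf_on_subset: "Cinf_on S g \<Longrightarrow> T \<subseteq> S \<Longrightarrow> Cinf_on T g"
  unfolding Cinf_on_def using Ck_on_subset[of _ S g T] by blast

lemma Cinf_on_const: "open S \<Longrightarrow> Cinf_on S (\<lambda>x. c)"
  unfolding Cinf_on_def by (simp add: Ck_on_const)

lemma Cinf_on_ident: "open S \<Longrightarrow> Cinf_on S (\<lambda>x. x)"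
  unfolding Cinf_on_def by (simp add: Ck_on_ident)

lemma Cinf_on_add: "open S \<Longrightarrow> Cinf_on S f \<Longrightarrow> Cinf_on S g \<Longrightarrow> Cinf_on S (\<lambda>x. f x + g x)"
  unfolding Cinf_on_def by (simp add: Ck_on_add)

lemma Cinf_on_bounded_linear:
  "bounded_linear L \<Longrightarrow> open S \<Longrightarrow> Cinf_on S f \<Longrightarrow> Cinf_on S (\<lambda>x. L (f x))"
  unfolding Cinf_on_def by (simp add: Ck_on_bounded_linear)

lemma Cinf_on_diff:
  fixes f g :: "real \<Rightarrow> 'a::real_normed_vector"
  shows "open S \<Longrightarrow> Cinf_on S f \<Longrightarrow> Cinf_on S g \<Longrightarrow> Cinf_on S (\<lambda>x. f x - g x)"
  using Cinf_on_add[of S f "\<lambda>x. - g x"] Cinf_on_bounded_linear[of uminus S g]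
  by (simp add: bounded_linear_minus[OF bounded_linear_ident])

lemma Cinf_on_mult:
  fixes f g :: "real \<Rightarrow> 'a::real_normed_algebra"
  shows "open S \<Longrightarrow> Cinf_on S f \<Longrightarrow> Cinf_on S g \<Longrightarrow> Cinf_on S (\<lambda>x. f x * g x)"
  unfolding Cinf_on_def by (simp add: Ck_on_mult)

lemma Cinf_on_holomorphic_comp:
  fixes f :: "real \<Rightarrow> complex"
  shows "open S \<Longrightarrow> open T \<Longrightarrow> g holomorphic_on T \<Longrightarrow> (\<And>x. x \<in> S \<Longrightarrow> f x \<in> T)
     \<Longrightarrow> Cinf_on S f \<Longrightarrow> Cinf_on S (\<lambda>x. g (f x))"
  unfolding Cinf_on_def using Ck_on_holomorphic_comp[of S T g f] by blast

lemma Cinf_on_divide: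
  fixes f g :: "real \<Rightarrow> complex"
  assumes "open S" "Cinf_on S f" "Cinf_on S g" "\<And>x. x \<in> S \<Longrightarrow> g x \<noteq> 0"
  shows "Cinf_on S (\<lambda>x. f x / g x)"
proof -
  have "Cinf_on S (\<lambda>x. inverse (g x))"
    by (rule Cinf_on_holomorphic_comp[OF assms(1) _ _ _ assms(3), where T="-{0}"])
       (use assms(4) in \<open>auto intro!: holomorphic_intros\<close>)
  then show ?thesis
    using Cinf_on_mult[OF assms(1,2)] by (simp add: divide_inverse)
qed

lemma Cinf_on_of_real: "open S \<Longrightarrow> Cinf_on S (\<lambda>x. complex_of_real x)"
  using Cinf_on_bounded_linear[OF bounded_linear_of_real _ Cinf_on_ident] by simp

lemma Cinf_on_iter_dderiv:
  fixes g :: "real \<Rightarrow> 'a::real_normed_vector"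
  assumes "open S" "Cinf_on S g"
  shows "\<forall>x\<in>S. iter_dderiv g vs x = prod_list vs *\<^sub>R (vderiv ^^ length vs) g x
    \<and> (iter_dderiv g vs has_derivative
         (\<lambda>v. v *\<^sub>R (prod_list vs *\<^sub>R (vderiv ^^ Suc (length vs)) g x))) (at x)"
proof (induction vs)
  case Nil
  show ?case
  proof
    fix x assume "x \<in> S"
    then have "(g has_vector_derivative vderiv g x) (at x)"
      using Cinf_on_has_vector_derivative assms(2) by blast
    then show "iter_dderiv g [] x = prod_list [] *\<^sub>R (vderiv ^^ length []) g x \<and>
        (iter_dderiv g [] has_derivative (\<lambda>v. v *\<^sub>R prod_list [] *\<^sub>R (vderiv ^^ Suc (length [])) g x)) (at x)"
      by (simp add: has_vector_derivative_def)
  qed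
next
  case (Cons w vs)
  have smooth: "Cinf_on S ((vderiv ^^ n) g)" for n
    by (induction n) (simp_all add: Cinf_on_vderiv assms(2))
  have iter: "iter_dderiv g (w # vs) y = prod_list (w # vs) *\<^sub>R (vderiv ^^ length (w # vs)) g y"
    if "y \<in> S" for y
  proof -
    have "iter_dderiv g (w # vs) y = frechet_derivative (iter_dderiv g vs) (at y) w"
      by simp
    also have "\<dots> = w *\<^sub>R (prod_list vs *\<^sub>R (vderiv ^^ Suc (length vs)) g y)"
      using Cons that frechet_derivative_at by metis
    finally show ?thesis by simp
  qed
  show ?case
  proof
    fix x assume x: "x \<in> S"
    have "((\<lambda>y. prod_list (w # vs) *\<^sub>R (vderiv ^^ length (w # vs)) g y) has_derivative
        (\<lambda>v. v *\<^sub>R (prod_list (w # vs) *\<^sub>R (vderiv ^^ Suc (length (w # vs))) g x))) (at x)"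
      using Cinf_on_has_vector_derivative[OF smooth x, of "length (w # vs)"]
      unfolding has_vector_derivative_def
      by (auto intro!: derivative_eq_intros simp: algebra_simps)
    then have "(iter_dderiv g (w # vs) has_derivative
        (\<lambda>v. v *\<^sub>R (prod_list (w # vs) *\<^sub>R (vderiv ^^ Suc (length (w # vs))) g x))) (at x)"
      by (rule has_derivative_transform_within_open[OF _ assms(1) x]) (use iter in auto)
    with iter[OF x] show "iter_dderiv g (w # vs) x = prod_list (w # vs) *\<^sub>R (vderiv ^^ length (w # vs)) g x
      \<and> (iter_dderiv g (w # vs) has_derivative
          (\<lambda>v. v *\<^sub>R (prod_list (w # vs) *\<^sub>R (vderiv ^^ Suc (length (w # vs))) g x))) (at x)"
      by simp
  qed
qed

lemma Cinf_on_imp_smooth_on: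
  fixes g :: "real \<Rightarrow> 'a::real_normed_vector"
  assumes "open S" "Cinf_on S g"
  shows "smooth_on S g"
  unfolding smooth_on_def
proof (intro conjI allI)
  fix vs
  show diff: "\<forall>x\<in>S. iter_dderiv g vs differentiable (at x)"
    using Cinf_on_iter_dderiv[OF assms, of vs] unfolding differentiable_def by blast
  show "continuous_on S (iter_dderiv g vs)"
    using diff by (simp add: continuous_at_imp_continuous_on differentiable_imp_continuous_within)
qed (rule assms(1))

lemma Cinf_on_primitive:
  fixes k :: "real \<Rightarrow> 'a::banach"
  assumes k: "Cinf_on J k" and ab: "{a..b} \<subseteq> J"
  obtains h where "Cinf_on {a<..<b} h" "\<And>x. x \<in> {a<..<b} \<Longrightarrow> (h has_vector_derivative k x) (at x)"
proof -
  define h where "h t = integral {a..t} k" for t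
  have "continuous_on {a..b} k"
    using Cinf_on_imp_continuous_on[OF k] ab by (rule continuous_on_subset)
  then have "(h has_vector_derivative k x) (at x)" if x: "x \<in> {a<..<b}" for x
  proof -
    have "(h has_vector_derivative k x) (at x within {a..b})"
      unfolding h_def using x by (intro integral_has_vector_derivative) (auto simp: \<open>continuous_on {a..b} k\<close>)
    then have "(h has_vector_derivative k x) (at x within {a<..<b})"
      by (rule has_vector_derivative_within_subset) auto
    then show ?thesis using at_within_open[OF x] by simp
  qed
  moreover have "Cinf_on {a<..<b} h"
  proof (rule Cinf_on_from_derivative[where g'=k])
    have "{a<..<b} \<subseteq> {a..b}" by auto
    then show "Cinf_on {a<..<b} k" using Cinf_on_subset[OF k] ab by blast
  qed (use calculation in auto)
  ultimately show ?thesis using that by blast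
qed

section \<open>Jointly smooth functions holomorphic in the first variable\<close>

lemma iter_dderiv_append: "iter_dderiv (iter_dderiv K ws) vs = iter_dderiv K (vs @ ws)"
  by (induction vs) auto

lemma smooth_on_iter_dderiv: "smooth_on U K \<Longrightarrow> smooth_on U (iter_dderiv K ws)"
  unfolding smooth_on_def iter_dderiv_append by blast

lemma smooth_on_imp_continuous_on:
  assumes "smooth_on U K" shows "continuous_on U K"
proof -
  have "continuous_on U (iter_dderiv K [])"
    using assms unfolding smooth_on_def by blast
  then show ?thesis by simp
qed

lemma smooth_on_has_derivative:
  assumes "smooth_on U K" "x \<in> U"
  shows "(K has_derivative frechet_derivative K (at x)) (at x)"
proof -
  have "iter_dderiv K [] differentiable (at x)"
    using assms unfolding smooth_on_def by blast
  then show ?thesis by (simp add: frechet_derivative_works[symmetric])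
qed

lemma frechet_derivative_cong_open:
  assumes "open U" "\<And>x. x \<in> U \<Longrightarrow> f x = g x" "x \<in> U"
  shows "frechet_derivative f (at x) = frechet_derivative g (at x)"
proof -
  have "(f has_derivative D) (at x) \<longleftrightarrow> (g has_derivative D) (at x)" for D
  proof
    assume "(f has_derivative D) (at x)"
    then show "(g has_derivative D) (at x)"
      by (rule has_derivative_transform_within_open[OF _ assms(1,3)]) (use assms(2) in auto)
  next
    assume "(g has_derivative D) (at x)"
    then show "(f has_derivative D) (at x)"
      by (rule has_derivative_transform_within_open[OF _ assms(1,3)]) (use assms(2) in auto)
  qed
  then show ?thesis unfolding frechet_derivative_def by simp
qed

lemma iter_dderiv_cong_open:
  assumes "open U" "\<And>x. x \<in> U \<Longrightarrow> f x = g x" "x \<in> U"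
  shows "iter_dderiv f vs x = iter_dderiv g vs x"
  using assms(3)
proof (induction vs arbitrary: x)
  case (Cons v vs)
  then show ?case using frechet_derivative_cong_open[OF assms(1) Cons.IH] by simp
qed (use assms(2) in simp)

lemma smooth_on_cong_open:
  assumes "\<And>x. x \<in> U \<Longrightarrow> f x = g x" "smooth_on U f"
  shows "smooth_on U g"
  unfolding smooth_on_def
proof (intro conjI allI ballI)
  fix vs
  have U: "open U" using assms(2) unfolding smooth_on_def by blast
  have eq: "\<And>x. x \<in> U \<Longrightarrow> iter_dderiv f vs x = iter_dderiv g vs x"
    by (rule iter_dderiv_cong_open[OF U assms(1)])
  show "continuous_on U (iter_dderiv g vs)"
  proof (rule continuous_on_eq)
    show "continuous_on U (iter_dderiv f vs)" using assms(2) unfolding smooth_on_def by blast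
  qed (use eq in auto)
  fix x assume x: "x \<in> U"
  obtain D where "(iter_dderiv f vs has_derivative D) (at x)"
    using assms(2) x unfolding smooth_on_def differentiable_def by blast
  then have "(iter_dderiv g vs has_derivative D) (at x)"
    by (rule has_derivative_transform_within_open[OF _ U x]) (use eq in auto)
  then show "iter_dderiv g vs differentiable (at x)" unfolding differentiable_def by blast
qed (use assms(2) smooth_on_def in blast)

lemma linear_complex_real_decomp:
  assumes "linear L"
  shows "L (a::complex, b::real) = Re a *\<^sub>R L (1, 0) + Im a *\<^sub>R L (\<i>, 0) + b *\<^sub>R L (0, 1)"
proof -
  have "(a, b) = Re a *\<^sub>R (1, 0) + Im a *\<^sub>R (\<i>, 0) + b *\<^sub>R ((0::complex), (1::real))"
    by (simp add: prod_eq_iff complex_eq_iff)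
  then have "L (a, b) = L (Re a *\<^sub>R (1, 0)) + L (Im a *\<^sub>R (\<i>, 0)) + L (b *\<^sub>R ((0::complex), (1::real)))"
    by (simp only: linear_add[OF assms])
  then show ?thesis by (simp only: linear_scale[OF assms])
qed

lemma has_vector_derivative_comp_curve:
  assumes K: "(K has_derivative L) (at (g1 t, g2 t))"
    and g1: "(g1 has_vector_derivative a) (at t)" and g2: "(g2 has_vector_derivative b) (at t)"
  shows "((\<lambda>t. K (g1 t, g2 t)) has_vector_derivative L (a, b)) (at t)"
proof -
  have "((\<lambda>t. (g1 t, g2 t)) has_derivative (\<lambda>h. (h *\<^sub>R a, h *\<^sub>R b))) (at t)"
    using g1 g2 unfolding has_vector_derivative_def by (rule has_derivative_Pair)
  from diff_chain_at[OF this K]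
  have "((\<lambda>t. K (g1 t, g2 t)) has_derivative (\<lambda>h. L (h *\<^sub>R a, h *\<^sub>R b))) (at t)"
    by (simp add: o_def)
  moreover have "L (h *\<^sub>R a, h *\<^sub>R b) = h *\<^sub>R L (a, b)" for h
    using linear_scale[OF has_derivative_linear[OF K], of h "(a, b)"] by (simp add: scaleR_prod_def)
  ultimately show ?thesis unfolding has_vector_derivative_def by simp
qed

text \<open>Along the curve, the derivative is a combination of the three first partial derivatives,
  which are again jointly smooth; this drives the induction on the order.\<close>
lemma Ck_on_comp_curve:
  fixes K :: "complex \<times> real \<Rightarrow> 'b::real_normed_vector"
  assumes S: "open S" and g1: "Cinf_on S g1" and g2: "Cinf_on S (g2 :: real \<Rightarrow> real)"
    and curve: "\<And>t. t \<in> S \<Longrightarrow> (g1 t, g2 t) \<in> U"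
  shows "smooth_on U K \<Longrightarrow> Ck_on n S (\<lambda>t. K (g1 t, g2 t))"
proof (induction n arbitrary: K)
  case (Suc n)
  let ?K1 = "iter_dderiv K [(1, 0)]" and ?K2 = "iter_dderiv K [(\<i>, 0)]"
    and ?K3 = "iter_dderiv K [(0, 1)]"
  define K' where "K' t = Re (vderiv g1 t) *\<^sub>R ?K1 (g1 t, g2 t) + Im (vderiv g1 t) *\<^sub>R ?K2 (g1 t, g2 t)
    + vderiv g2 t *\<^sub>R ?K3 (g1 t, g2 t)" for t
  have coeffs: "Cinf_on S (\<lambda>t. Re (vderiv g1 t))" "Cinf_on S (\<lambda>t. Im (vderiv g1 t))"
    "Cinf_on S (vderiv g2)"
    using Cinf_on_bounded_linear[OF bounded_linear_Re S Cinf_on_vderiv[OF g1]]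
      Cinf_on_bounded_linear[OF bounded_linear_Im S Cinf_on_vderiv[OF g1]]
      Cinf_on_vderiv[OF g2] by auto
  have "Ck_on n S (\<lambda>t. ?K1 (g1 t, g2 t))" "Ck_on n S (\<lambda>t. ?K2 (g1 t, g2 t))"
    "Ck_on n S (\<lambda>t. ?K3 (g1 t, g2 t))"
    using Suc.IH[OF smooth_on_iter_dderiv[OF Suc.prems]] by blast+
  then have ck: "Ck_on n S K'"
    using coeffs S unfolding K'_def Cinf_on_def by (intro Ck_on_add Ck_on_scaleR) blast+
  have der: "((\<lambda>t. K (g1 t, g2 t)) has_vector_derivative K' t) (at t)" if t: "t \<in> S" for t
  proof -
    have K: "(K has_derivative frechet_derivative K (at (g1 t, g2 t))) (at (g1 t, g2 t))"
      using smooth_on_has_derivative[OF Suc.prems curve[OF t]] .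
    have "frechet_derivative K (at (g1 t, g2 t)) (vderiv g1 t, vderiv g2 t) = K' t"
      using linear_complex_real_decomp[OF has_derivative_linear[OF K], of "vderiv g1 t" "vderiv g2 t"]
      by (simp add: K'_def)
    with has_vector_derivative_comp_curve[OF K Cinf_on_has_vector_derivative[OF g1 t]
        Cinf_on_has_vector_derivative[OF g2 t]]
    show ?thesis by simp
  qed
  show ?case by (rule Ck_on_SucI[OF S der ck])
qed simp

lemma Cinf_on_comp_curve:
  fixes K :: "complex \<times> real \<Rightarrow> 'b::real_normed_vector"
  assumes "open S" "Cinf_on S g1" "Cinf_on S (g2 :: real \<Rightarrow> real)"
    "\<And>t. t \<in> S \<Longrightarrow> (g1 t, g2 t) \<in> U" "smooth_on U K"
  shows "Cinf_on S (\<lambda>t. K (g1 t, g2 t))"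
  unfolding Cinf_on_def using Ck_on_comp_curve[OF assms(1-4) assms(5)] by blast

definition partial_z :: "(complex \<times> real \<Rightarrow> complex) \<Rightarrow> complex \<times> real \<Rightarrow> complex" where
  "partial_z K p = deriv (\<lambda>w. K (w, snd p)) (fst p)"

definition partial_u :: "(complex \<times> real \<Rightarrow> complex) \<Rightarrow> complex \<times> real \<Rightarrow> complex" where
  "partial_u K p = vector_derivative (\<lambda>t. K (fst p, t)) (at (snd p))"

definition holomorphic_slices :: "(complex \<times> real) set \<Rightarrow> (complex \<times> real \<Rightarrow> complex) \<Rightarrow> bool" where
  "holomorphic_slices U K \<longleftrightarrow> (\<forall>p\<in>U. (\<lambda>w. K (w, snd p)) field_differentiable at (fst p))"

lemma holomorphic_slicesD:
  "holomorphic_slices U K \<Longrightarrow> (w, t) \<in> U \<Longrightarrow> (\<lambda>w. K (w, t)) field_differentiable at w"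
  unfolding holomorphic_slices_def by force

lemma has_field_derivative_partial_z:
  "holomorphic_slices U K \<Longrightarrow> (w, t) \<in> U \<Longrightarrow>
    ((\<lambda>w. K (w, t)) has_field_derivative partial_z K (w, t)) (at w)"
  unfolding partial_z_def by (simp add: holomorphic_slicesD DERIV_deriv_iff_field_differentiable)

lemma open_slice_fst: "open U \<Longrightarrow> open {x. (x, y) \<in> U}"
  using open_vimage[of U "\<lambda>x. (x, y)"] by (simp add: vimage_def continuous_on_Pair)

lemma open_slice_snd: "open U \<Longrightarrow> open {y. (x, y) \<in> U}"
  using open_vimage[of U "\<lambda>y. (x, y)"] by (simp add: vimage_def continuous_on_Pair)

lemma frechet_derivative_fst_direction:
  assumes "smooth_on U K" "holomorphic_slices U K" "(z, u) \<in> U"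
  shows "frechet_derivative K (at (z, u)) (a, 0) = a * partial_z K (z, u)"
proof -
  have K: "(K has_derivative frechet_derivative K (at (z, u))) (at (z, u))"
    using smooth_on_has_derivative assms(1,3) by blast
  have "((\<lambda>w. (w, u)) has_derivative (\<lambda>a. (a, 0))) (at z)"
    by (rule has_derivative_Pair[OF has_derivative_ident has_derivative_const, simplified])
  from diff_chain_at[OF this K]
  have "((\<lambda>w. K (w, u)) has_derivative (\<lambda>a. frechet_derivative K (at (z, u)) (a, 0))) (at z)"
    by (simp add: o_def)
  moreover have "((\<lambda>w. K (w, u)) has_derivative (\<lambda>a. partial_z K (z, u) * a)) (at z)"
    using has_field_derivative_partial_z[OF assms(2,3)] by (simp add: has_field_derivative_def)
  ultimately have "(\<lambda>a. frechet_derivative K (at (z, u)) (a, 0)) = (\<lambda>a. partial_z K (z, u) * a)"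
    by (rule has_derivative_unique)
  then show ?thesis by (simp add: fun_eq_iff mult.commute)
qed

lemma frechet_derivative_snd_direction:
  assumes "smooth_on U K" "(z, u) \<in> U"
  shows "frechet_derivative K (at (z, u)) (0, 1) = partial_u K (z, u)"
    and "((\<lambda>t. K (z, t)) has_vector_derivative partial_u K (z, u)) (at u)"
proof -
  have K: "(K has_derivative frechet_derivative K (at (z, u))) (at (z, u))"
    using smooth_on_has_derivative assms by blast
  have "((\<lambda>t. K (z, t)) has_vector_derivative frechet_derivative K (at (z, u)) (0, 1)) (at u)"
    using has_vector_derivative_comp_curve[OF _ has_vector_derivative_const has_vector_derivative_id, of K]
      K by simp
  then show "frechet_derivative K (at (z, u)) (0, 1) = partial_u K (z, u)"
    and "((\<lambda>t. K (z, t)) has_vector_derivative partial_u K (z, u)) (at u)"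
    unfolding partial_u_def by (simp_all add: vector_derivative_at)
qed

lemma smooth_on_partial_z:
  assumes "smooth_on U K" "holomorphic_slices U K"
  shows "smooth_on U (partial_z K)"
proof (rule smooth_on_cong_open[OF _ smooth_on_iter_dderiv[OF assms(1), of "[(1, 0)]"]])
  fix p assume p: "p \<in> U"
  obtain z u where "p = (z, u)" by (cases p)
  then show "iter_dderiv K [(1, 0)] p = partial_z K p"
    using frechet_derivative_fst_direction[OF assms, of z u 1] p by simp
qed

lemma smooth_on_partial_u:
  assumes "smooth_on U K"
  shows "smooth_on U (partial_u K)"
proof (rule smooth_on_cong_open[OF _ smooth_on_iter_dderiv[OF assms, of "[(0, 1)]"]])
  fix p assume p: "p \<in> U"
  obtain z u where "p = (z, u)" by (cases p)
  then show "iter_dderiv K [(0, 1)] p = partial_u K p"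
    using frechet_derivative_snd_direction(1)[OF assms, of z u] p by simp
qed

lemma holomorphic_slices_partial_z:
  assumes "open U" "holomorphic_slices U K"
  shows "holomorphic_slices U (partial_z K)"
  unfolding holomorphic_slices_def
proof
  fix p assume p: "p \<in> U"
  define S where "S = {w. (w, snd p) \<in> U}"
  have S: "open S" "fst p \<in> S" using open_slice_fst[OF assms(1)] p by (auto simp: S_def)
  have "(\<lambda>w. K (w, snd p)) holomorphic_on S"
    unfolding holomorphic_on_def S_def
  proof
    fix w assume "w \<in> {w. (w, snd p) \<in> U}"
    then show "(\<lambda>w. K (w, snd p)) field_differentiable at w within {w. (w, snd p) \<in> U}"
      using holomorphic_slicesD[OF assms(2)] field_differentiable_at_within by blast
  qed
  then have "deriv (\<lambda>w. K (w, snd p)) holomorphic_on S"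
    using holomorphic_deriv S(1) by blast
  then have "deriv (\<lambda>w. K (w, snd p)) field_differentiable at (fst p)"
    using holomorphic_on_imp_differentiable_at S by blast
  moreover have "(\<lambda>w. partial_z K (w, snd p)) = deriv (\<lambda>w. K (w, snd p))"
    by (simp add: partial_z_def fun_eq_iff)
  ultimately show "(\<lambda>w. partial_z K (w, snd p)) field_differentiable at (fst p)"
    by simp
qed

lemma open_contains_cball_Times:
  assumes "open U" "(x, y) \<in> U"
  obtains e where "e > 0" "cball x e \<times> cball y e \<subseteq> U"
proof -
  obtain A B where AB: "open A" "open B" "x \<in> A" "y \<in> B" "A \<times> B \<subseteq> U"
    using open_prod_elim[OF assms] by (metis mem_Sigma_iff)
  obtain e1 where e1: "e1 > 0" "cball x e1 \<subseteq> A"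
    using open_contains_cball[of A] AB(1,3) by blast
  obtain e2 where e2: "e2 > 0" "cball y e2 \<subseteq> B"
    using open_contains_cball[of B] AB(2,4) by blast
  have "cball x (min e1 e2) \<times> cball y (min e1 e2) \<subseteq> A \<times> B"
    using e1(2) e2(2) subset_cball[of "min e1 e2" e1 x] subset_cball[of "min e1 e2" e2 y]
    by (intro Sigma_mono) auto
  then have "cball x (min e1 e2) \<times> cball y (min e1 e2) \<subseteq> U"
    using AB(5) by (rule order.trans)
  moreover have "min e1 e2 > 0" using e1(1) e2(1) by simp
  ultimately show ?thesis using that by blast
qed

lemma vector_derivative_linearization_bound:
  fixes g :: "real \<Rightarrow> 'a::real_normed_vector"
  assumes der: "\<And>t. t \<in> cball u r \<Longrightarrow> (g has_vector_derivative g' t) (at t)"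
    and bound: "\<And>t. t \<in> cball u r \<Longrightarrow> norm (g' t - g' u) \<le> B" and h: "\<bar>h\<bar> \<le> r"
  shows "norm (g (u + h) - g u - h *\<^sub>R g' u) \<le> \<bar>h\<bar> * B"
proof -
  have "norm (g (u + h) - g u - (\<lambda>b. b *\<^sub>R g' u) (u + h - u)) \<le> norm (u + h - u) * B"
  proof (rule differentiable_bound_linearization[of u "u + h" "cball u r" _ "\<lambda>t b. b *\<^sub>R g' t"])
    fix \<tau> :: real assume "\<tau> \<in> {0..1}"
    then have "\<bar>\<tau> * h\<bar> \<le> r"
      using h mult_left_le_one_le[of "\<bar>h\<bar>" \<tau>] by (simp add: abs_mult)
    then show "u + \<tau> *\<^sub>R (u + h - u) \<in> cball u r" by (simp add: dist_real_def)
  next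
    fix t assume t: "t \<in> cball u r"
    show "(g has_derivative (\<lambda>b. b *\<^sub>R g' t)) (at t within cball u r)"
      using der[OF t] unfolding has_vector_derivative_def by (rule has_derivative_at_withinI)
    have "(\<lambda>b::real. b *\<^sub>R g' t) - (\<lambda>b. b *\<^sub>R g' u) = (\<lambda>b. b *\<^sub>R (g' t - g' u))"
      by (auto simp: fun_eq_iff algebra_simps)
    then show "onorm ((\<lambda>b. b *\<^sub>R g' t) - (\<lambda>b. b *\<^sub>R g' u)) \<le> B"
      using onorm_scaleR_left[OF bounded_linear_ident, of "g' t - g' u"] onorm_id[where 'a=real]
        bound[OF t] by simp
  qed (use h in simp)
  then show ?thesis by simp
qed

lemma uniform_limit_difference_quotient:
  fixes K :: "complex \<times> real \<Rightarrow> complex"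
  assumes K: "smooth_on U K" and box: "cball z e \<times> cball u e \<subseteq> U" and "e > 0"
  shows "uniform_limit (cball z e) (\<lambda>h w. (K (w, u + h) - K (w, u)) / of_real h)
           (\<lambda>w. partial_u K (w, u)) (at 0)"
proof (rule uniform_limitI)
  fix \<epsilon> :: real assume \<epsilon>: "\<epsilon> > 0"
  have "uniformly_continuous_on (cball z e \<times> cball u e) (partial_u K)"
    using box smooth_on_imp_continuous_on[OF smooth_on_partial_u[OF K]]
    by (intro compact_uniformly_continuous) (auto simp: compact_Times intro: continuous_on_subset)
  then obtain d where d: "d > 0" "\<And>x x'. x \<in> cball z e \<times> cball u e \<Longrightarrow> x' \<in> cball z e \<times> cball u e
      \<Longrightarrow> dist x' x < d \<Longrightarrow> dist (partial_u K x') (partial_u K x) < \<epsilon> / 2"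
    unfolding uniformly_continuous_on_def using \<epsilon> by (meson half_gt_zero)
  show "\<forall>\<^sub>F h in at 0. \<forall>w\<in>cball z e.
      dist ((K (w, u + h) - K (w, u)) / of_real h) (partial_u K (w, u)) < \<epsilon>"
    unfolding eventually_at
  proof (intro exI[of _ "min d e"] conjI ballI impI)
    fix h :: real and w assume h: "h \<noteq> 0 \<and> dist h 0 < min d e" and w: "w \<in> cball z e"
    define r where "r = \<bar>h\<bar>"
    have inbox: "(w, t) \<in> cball z e \<times> cball u e" if "t \<in> cball u r" for t
      using that w h by (auto simp: r_def dist_real_def)
    have "norm (K (w, u + h) - K (w, u) - h *\<^sub>R partial_u K (w, u)) \<le> \<bar>h\<bar> * (\<epsilon> / 2)"
    proof (rule vector_derivative_linearization_bound[where g="\<lambda>t. K (w, t)"])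
      fix t assume t: "t \<in> cball u r"
      show "((\<lambda>t. K (w, t)) has_vector_derivative partial_u K (w, t)) (at t)"
        using frechet_derivative_snd_direction(2)[OF K] inbox[OF t] box by blast
      have "dist (w, t) (w, u) < d" using t h by (simp add: dist_Pair_Pair r_def dist_commute)
      then show "norm (partial_u K (w, t) - partial_u K (w, u)) \<le> \<epsilon> / 2"
        using d(2)[OF inbox inbox[OF t]] h by (simp add: dist_norm r_def less_imp_le)
    qed (simp add: r_def)
    then have "norm ((K (w, u + h) - K (w, u)) / of_real h - partial_u K (w, u)) \<le> \<epsilon> / 2"
      using h by (simp add: scaleR_conv_of_real norm_divide divide_le_eq field_simps mult.commute)
    then show "dist ((K (w, u + h) - K (w, u)) / of_real h) (partial_u K (w, u)) < \<epsilon>"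
      using \<epsilon> by (simp add: dist_norm)
  qed (use d \<open>e > 0\<close> in auto)
qed

text \<open>The \<open>u\<close>-derivative is the locally uniform limit of the difference quotients, which are
  holomorphic in \<open>\<zeta>\<close>.\<close>
lemma holomorphic_slices_partial_u:
  assumes K: "smooth_on U K" "holomorphic_slices U K"
  shows "holomorphic_slices U (partial_u K)"
  unfolding holomorphic_slices_def
proof
  fix p assume p: "p \<in> U"
  obtain z u where p_eq: "p = (z, u)" by (cases p)
  have "open U" using K(1) unfolding smooth_on_def by blast
  then obtain e where e: "e > 0" "cball z e \<times> cball u e \<subseteq> U"
    using open_contains_cball_Times[of U z u] p p_eq by blast
  define Dq where "Dq h w = (K (w, u + h) - K (w, u)) / of_real h" for h :: real and w
  have "continuous_on (cball z e) (Dq h) \<and> Dq h holomorphic_on ball z e"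
    if h: "h \<noteq> 0" "dist h 0 < e" for h
  proof -
    have "Dq h field_differentiable at w" if w: "w \<in> cball z e" for w
    proof -
      have "(w, u + h) \<in> U" "(w, u) \<in> U" using e w h by (auto simp: dist_real_def)
      then show ?thesis
        unfolding Dq_def using h holomorphic_slicesD[OF K(2)]
        by (intro field_differentiable_divide field_differentiable_diff field_differentiable_const) auto
    qed
    then show ?thesis
      by (auto simp: continuous_at_imp_continuous_on field_differentiable_imp_continuous_at
          holomorphic_on_def field_differentiable_at_within)
  qed
  then have "\<forall>\<^sub>F h in at 0. continuous_on (cball z e) (Dq h) \<and> Dq h holomorphic_on ball z e"
    unfolding eventually_at using e(1) by blast
  then obtain "(\<lambda>w. partial_u K (w, u)) holomorphic_on ball z e"
    using holomorphic_uniform_limit[OF _ uniform_limit_difference_quotient[OF K(1) e(2,1)]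
      trivial_limit_at] unfolding Dq_def by blast
  then show "(\<lambda>w. partial_u K (w, snd p)) field_differentiable at (fst p)"
    using holomorphic_on_imp_differentiable_at[of _ "ball z e" z] e p_eq by simp
qed

section \<open>Complex derivatives\<close>

lemma deriv_eq_on_open:
  assumes "open S" "w \<in> S" "\<And>x. x \<in> S \<Longrightarrow> g x = e x" "(e has_field_derivative e') (at w)"
  shows "deriv g w = e'"
proof -
  have "eventually (\<lambda>x. g x = e x) (nhds w)"
    using assms(1-3) by (auto simp: eventually_nhds)
  then have "deriv g w = deriv e w" by (rule deriv_cong_ev) simp
  with assms(4) show ?thesis by (simp add: DERIV_imp_deriv)
qed

lemma has_field_derivative_comp_affine:
  assumes "G holomorphic_on W" "open W" "x * c - h \<in> W"
  shows "((\<lambda>x. G (x * c - h)) has_field_derivative c * deriv G (x * c - h)) (at x)"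
proof -
  have "((\<lambda>x. x * c - h) has_field_derivative c) (at x)"
    by (auto intro!: derivative_eq_intros)
  from DERIV_chain2[OF holomorphic_derivI[OF assms] this] show ?thesis
    by (simp add: mult.commute)
qed

lemma higher_deriv_comp_affine:
  fixes F :: "complex \<Rightarrow> complex"
  assumes S: "open S" and W: "open W" "F holomorphic_on W" and into: "\<And>x. x \<in> S \<Longrightarrow> x * c - h \<in> W"
    and g: "\<And>x. x \<in> S \<Longrightarrow> g x = F (x * c - h) / s + a * x + b" and x: "x \<in> S"
  shows "deriv (deriv g) x = c ^ 2 * (deriv ^^ 2) F (x * c - h) / s"
    and "deriv (deriv (deriv g)) x = c ^ 3 * (deriv ^^ 3) F (x * c - h) / s"
proof -
  have hol: "(deriv ^^ n) F holomorphic_on W" for n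
    by (induction n) (simp_all add: W holomorphic_deriv)
  have chain: "((\<lambda>x. (deriv ^^ n) F (x * c - h)) has_field_derivative
      c * (deriv ^^ Suc n) F (x * c - h)) (at x)" if "x \<in> S" for n x
    using has_field_derivative_comp_affine[OF hol W(1) into[OF that]] by simp
  have d1: "deriv g x = c * deriv F (x * c - h) / s + a" if "x \<in> S" for x
  proof (rule deriv_eq_on_open[OF S that g])
    show "((\<lambda>x. F (x * c - h) / s + a * x + b) has_field_derivative c * deriv F (x * c - h) / s + a) (at x)"
      using DERIV_add[OF DERIV_cdivide[OF chain[OF that, of 0], of s]
          DERIV_add[OF DERIV_cmult[OF DERIV_ident, of a] DERIV_const[of b]]]
      by (simp add: add.assoc)
  qed
  have d2: "deriv (deriv g) x = c ^ 2 * (deriv ^^ 2) F (x * c - h) / s" if "x \<in> S" for x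
  proof (rule deriv_eq_on_open[OF S that d1])
    show "((\<lambda>x. c * deriv F (x * c - h) / s + a) has_field_derivative c ^ 2 * (deriv ^^ 2) F (x * c - h) / s) (at x)"
      using DERIV_add[OF DERIV_cdivide[OF DERIV_cmult[OF chain[OF that, of 1]]] DERIV_const[of a]]
      by (simp add: power2_eq_square numeral_2_eq_2 mult.assoc)
  qed
  show "deriv (deriv g) x = c ^ 2 * (deriv ^^ 2) F (x * c - h) / s"
    using d2[OF x] .
  show "deriv (deriv (deriv g)) x = c ^ 3 * (deriv ^^ 3) F (x * c - h) / s"
  proof (rule deriv_eq_on_open[OF S x d2])
    show "((\<lambda>x. c ^ 2 * (deriv ^^ 2) F (x * c - h) / s) has_field_derivative c ^ 3 * (deriv ^^ 3) F (x * c - h) / s) (at x)"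
      using DERIV_cdivide[OF DERIV_cmult[OF chain[OF x, of 2]], of "c ^ 2" s]
      by (simp add: power2_eq_square power3_eq_cube numeral_3_eq_3 mult.assoc)
  qed
qed

lemma deriv_eq_deriv_plus_linear:
  assumes "\<forall>\<^sub>F w in nhds z. g w = r w + a * w + b" "\<forall>\<^sub>F w in nhds z. q w = r w"
    and "r field_differentiable at z"
  shows "deriv g z = deriv q z + a"
proof -
  have "deriv g z = deriv (\<lambda>w. r w + a * w + b) z" by (rule deriv_cong_ev[OF assms(1) refl])
  also have "\<dots> = deriv r z + a"
    using assms(3) by (intro DERIV_imp_deriv) (auto intro!: derivative_eq_intros simp: field_differentiable_derivI)
  also have "deriv r z = deriv q z" by (rule deriv_cong_ev[OF assms(2) refl, symmetric])
  finally show ?thesis .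
qed

lemma zero_second_derivative_imp_affine:
  fixes g :: "'a::real_normed_field \<Rightarrow> 'a"
  assumes S: "convex S" "x0 \<in> S" "x \<in> S"
    and g: "\<And>x. x \<in> S \<Longrightarrow> (g has_field_derivative g' x) (at x)"
    and g': "\<And>x. x \<in> S \<Longrightarrow> (g' has_field_derivative 0) (at x)"
  shows "g x = g x0 + g' x0 * (x - x0)"
proof -
  have "\<exists>a. \<forall>x\<in>S. g' x = a"
  proof (rule has_field_derivative_zero_constant[OF S(1)])
    fix x assume "x \<in> S"
    then show "(g' has_field_derivative 0) (at x within S)"
      using g' has_field_derivative_at_within by blast
  qed
  then obtain a where a: "\<And>x. x \<in> S \<Longrightarrow> g' x = a" by blast
  have "((\<lambda>x. g x - a * x) has_field_derivative 0) (at x within S)" if "x \<in> S" for x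
    using DERIV_diff[OF g[OF that] DERIV_cmult[OF DERIV_ident, of a]] a[OF that]
    by (auto intro: has_field_derivative_at_within)
  then have "\<exists>b. \<forall>x\<in>S. g x - a * x = b"
    by (rule has_field_derivative_zero_constant[OF S(1)])
  then obtain b where "\<And>x. x \<in> S \<Longrightarrow> g x - a * x = b" by blast
  from this[OF S(2)] this[OF S(3)] a[OF S(2)] show ?thesis by (simp add: algebra_simps)
qed

lemma affine_difference_of_deriv_eq:
  fixes L R :: "complex \<Rightarrow> complex"
  assumes S: "convex S" and diff: "\<And>x. x \<in> S \<Longrightarrow> L field_differentiable at x"
    "\<And>x. x \<in> S \<Longrightarrow> R field_differentiable at x"
    and eq: "\<And>x. x \<in> S \<Longrightarrow> deriv L x = deriv R x + a" and xy: "x \<in> S" "y \<in> S"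
  shows "L x - R x - a * x = L y - R y - a * y"
proof -
  have "((\<lambda>x. L x - R x - a * x) has_field_derivative 0) (at x within S)" if "x \<in> S" for x
  proof -
    have "((\<lambda>x. L x - R x - a * x) has_field_derivative deriv L x - deriv R x - a) (at x)"
      using diff[OF that] by (auto intro!: derivative_eq_intros simp: field_differentiable_derivI)
    then show ?thesis using eq[OF that] by (auto intro: has_field_derivative_at_within)
  qed
  then obtain C where "\<forall>x\<in>S. L x - R x - a * x = C"
    using has_field_derivative_zero_constant[OF S] by blast
  then show ?thesis using xy by simp
qed

lemma holomorphic_convex_primitive_at:
  fixes g :: "complex \<Rightarrow> complex"
  assumes "convex S" "open S" "g holomorphic_on S"
  obtains G where "G holomorphic_on S" "\<And>x. x \<in> S \<Longrightarrow> (G has_field_derivative g x) (at x)"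
proof -
  obtain G where G: "\<And>x. x \<in> S \<Longrightarrow> (G has_field_derivative g x) (at x within S)"
    using holomorphic_convex_primitive'[OF assms] by blast
  then have "\<And>x. x \<in> S \<Longrightarrow> (G has_field_derivative g x) (at x)"
    using at_within_open[OF _ assms(2)] by fastforce
  moreover have "G holomorphic_on S"
    unfolding holomorphic_on_def field_differentiable_def using G by blast
  ultimately show ?thesis using that by blast
qed

section \<open>The power \<open>(u - u\<^sub>0)\<^sup>i\<^sup>\<kappa>\<close>\<close>

lemma norm_cpow_ik [simp]: "norm (cpow_ik \<kappa> u0 t) = 1"
  unfolding cpow_ik_def by simp

lemma cpow_ik_nonzero [simp]: "cpow_ik \<kappa> u0 t \<noteq> 0"
  unfolding cpow_ik_def by simp

lemma cpow_ik_mult_minus: "cpow_ik \<kappa> u0 t * cpow_ik (- \<kappa>) u0 t = 1"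
  unfolding cpow_ik_def by (simp add: exp_add[symmetric])

lemma has_vector_derivative_cpow_ik:
  assumes "u0 < t"
  shows "(cpow_ik \<kappa> u0 has_vector_derivative (\<i> * of_real \<kappa> / of_real (t - u0)) * cpow_ik \<kappa> u0 t) (at t)"
proof -
  have "((\<lambda>t. \<kappa> * ln (t - u0)) has_real_derivative \<kappa> / (t - u0)) (at t)"
    using assms by (auto intro!: derivative_eq_intros)
  then have "((\<lambda>t. \<i> * complex_of_real (\<kappa> * ln (t - u0))) has_vector_derivative
      \<i> * of_real (\<kappa> / (t - u0))) (at t)"
    by (intro bounded_linear.has_vector_derivative[OF bounded_linear_mult_right]
        has_vector_derivative_of_real)
  from field_vector_diff_chain_at[OF this DERIV_exp]
  show ?thesis unfolding cpow_ik_def o_def by (simp add: field_simps)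
qed

lemma Cinf_on_cpow_ik: "Cinf_on {u0<..} (cpow_ik \<kappa> u0)"
proof -
  have "Cinf_on {u0<..} (\<lambda>t. exp (\<i> * of_real \<kappa> * Ln (complex_of_real t - of_real u0)))"
  proof (rule Cinf_on_holomorphic_comp[where T="{z. Re z > 0}" and g="\<lambda>z. exp (\<i> * of_real \<kappa> * Ln z)"
        and f="\<lambda>t. complex_of_real t - of_real u0"])
    show "Cinf_on {u0<..} (\<lambda>t. complex_of_real t - of_real u0)"
      by (intro Cinf_on_diff Cinf_on_of_real Cinf_on_const) auto
    show "(\<lambda>z. exp (\<i> * of_real \<kappa> * Ln z)) holomorphic_on {z. Re z > 0}"
      by (intro holomorphic_intros) (auto simp: complex_nonpos_Reals_iff)
  qed (auto simp: open_halfspace_Re_gt)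
  then show ?thesis
  proof (rule Cinf_on_cong_open[rotated 2])
    fix t :: real assume "t \<in> {u0<..}"
    then have "Ln (complex_of_real t - of_real u0) = of_real (ln (t - u0))"
      using Ln_of_real[of "t - u0"] by simp
    then show "exp (\<i> * of_real \<kappa> * Ln (complex_of_real t - of_real u0)) = cpow_ik \<kappa> u0 t"
      by (simp add: cpow_ik_def mult.assoc)
  qed simp
qed

lemma has_vector_derivative_local_form_coefficient:
  assumes "u0 < u"
  shows "((\<lambda>t. (cpow_ik \<kappa> u0 t / of_real (t - u0))\<^sup>2) has_vector_derivative
      (2 * \<i> * of_real \<kappa> - 2) / of_real (u - u0) * (cpow_ik \<kappa> u0 u / of_real (u - u0))\<^sup>2) (at u)"
proof -
  define c where "c = cpow_ik \<kappa> u0 u"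
  define d where "d = complex_of_real (u - u0)"
  define p where "p t = cpow_ik \<kappa> u0 t * of_real (inverse (t - u0))" for t
  define p' where "p' = c * (- inverse (d\<^sup>2)) + (\<i> * of_real \<kappa> / d) * c * inverse d"
  have d: "d \<noteq> 0" using assms by (simp add: d_def)
  have "((\<lambda>t. inverse (t - u0)) has_real_derivative - inverse ((u - u0)\<^sup>2)) (at u)"
    using assms by (auto intro!: derivative_eq_intros simp: power2_eq_square)
  from has_vector_derivative_mult[OF has_vector_derivative_cpow_ik[OF assms]
      has_vector_derivative_of_real[OF this]]
  have "(p has_vector_derivative p') (at u)"
    unfolding p_def p'_def c_def d_def by (simp add: mult.commute)
  from has_vector_derivative_mult[OF this this]
  have "((\<lambda>t. p t * p t) has_vector_derivative p u * p' + p' * p u) (at u)" .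
  moreover have "(\<lambda>t. p t * p t) = (\<lambda>t. (cpow_ik \<kappa> u0 t / of_real (t - u0))\<^sup>2)"
    by (simp add: p_def fun_eq_iff power2_eq_square divide_inverse)
  moreover have "p u = c * inverse d" by (simp add: p_def c_def d_def)
  then have "p u * p' + p' * p u = (2 * \<i> * of_real \<kappa> - 2) / d * (c / d)\<^sup>2"
    using d by (simp add: p'_def field_simps power2_eq_square)
  ultimately show ?thesis by (simp add: c_def d_def)
qed

section \<open>The local form implies the equation\<close>

definition phi_psi_equation :: "real \<Rightarrow> real \<Rightarrow> (complex \<Rightarrow> real \<Rightarrow> complex) \<Rightarrow> complex \<Rightarrow> real \<Rightarrow> bool" where
  "phi_psi_equation \<kappa> u0 f z u \<longleftrightarrow>
     deriv (\<lambda>w. of_real (u - u0) * psi f w u / phi f w u) z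
       = deriv (\<lambda>w. (2 * \<i> * of_real \<kappa> - 2) / phi f w u) z + \<i> * of_real \<kappa>"

definition has_local_form :: "real \<Rightarrow> real \<Rightarrow> (complex \<Rightarrow> real \<Rightarrow> complex) \<Rightarrow> (complex \<times> real) set \<Rightarrow> bool" where
  "has_local_form \<kappa> u0 f V \<longleftrightarrow>
     (\<exists>F h A1 A0 W I.
        open W \<and> F holomorphic_on W \<and> (\<forall>w\<in>W. (deriv ^^ 3) F w \<noteq> 0) \<and>
        open I \<and> snd ` V \<subseteq> I \<and>
        smooth_on I (h :: real \<Rightarrow> complex) \<and> smooth_on I (A1 :: real \<Rightarrow> complex) \<and>
        smooth_on I (A0 :: real \<Rightarrow> complex) \<and>
        (\<forall>(z, u)\<in>V. z * cpow_ik \<kappa> u0 u - h u \<in> W \<and>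
           f z u = F (z * cpow_ik \<kappa> u0 u - h u) / of_real ((u - u0)^2) + A1 u * z + A0 u))"

lemma fzz_eq: "fzz f w t = deriv (deriv (\<lambda>w. f w t)) w"
  by (simp add: fzz_def numeral_2_eq_2)

lemma phi_eq: "phi f w t = fzzz f w t / fzz f w t"
  by (simp add: phi_def fzz_def fzzz_def numeral_3_eq_3 numeral_2_eq_2)

lemma psi_eq_of_product:
  assumes T: "open T" "u \<in> T" and fzz: "\<And>t. t \<in> T \<Longrightarrow> fzz f w t = q t * G (\<xi> t)"
    and q: "(q has_vector_derivative q') (at u)" and \<xi>: "(\<xi> has_vector_derivative \<xi>') (at u)"
    and G: "(G has_field_derivative G') (at (\<xi> u))" and nz: "q u \<noteq> 0" "G (\<xi> u) \<noteq> 0"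
  shows "psi f w u = q' / q u + \<xi>' * G' / G (\<xi> u)"
proof -
  have "((\<lambda>t. q t * G (\<xi> t)) has_vector_derivative q u * (\<xi>' * G') + q' * G (\<xi> u)) (at u)"
    using field_vector_diff_chain_at[OF \<xi> G] q by (intro has_vector_derivative_mult) (simp_all add: o_def)
  then have "((\<lambda>t. fzz f w t) has_vector_derivative q u * (\<xi>' * G') + q' * G (\<xi> u)) (at u)"
    by (rule has_vector_derivative_transform_within_open[OF _ T]) (use fzz in simp)
  then show ?thesis
    unfolding psi_def using fzz[OF T(2)] nz by (simp add: vector_derivative_at field_simps)
qed

lemma psi_of_local_form:
  assumes T: "open T" "u \<in> T" and u0_less: "u0 < u"
    and fzz: "\<And>t. t \<in> T \<Longrightarrow>
      fzz f w t = cpow_ik \<kappa> u0 t ^ 2 * G (w * cpow_ik \<kappa> u0 t - h t) / of_real ((t - u0)\<^sup>2)"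
    and h: "(h has_vector_derivative h') (at u)"
    and G: "(G has_field_derivative G') (at (w * cpow_ik \<kappa> u0 u - h u))"
    and G_nz: "G (w * cpow_ik \<kappa> u0 u - h u) \<noteq> 0"
  shows "psi f w u = (2 * \<i> * of_real \<kappa> - 2) / of_real (u - u0)
    + (w * ((\<i> * of_real \<kappa> / of_real (u - u0)) * cpow_ik \<kappa> u0 u) - h') * G' / G (w * cpow_ik \<kappa> u0 u - h u)"
proof -
  define c where "c = cpow_ik \<kappa> u0"
  define q where "q t = (c t / of_real (t - u0))\<^sup>2" for t
  define q' where "q' = (2 * \<i> * of_real \<kappa> - 2) / of_real (u - u0) * q u"
  have "psi f w u = q' / q u + (w * ((\<i> * of_real \<kappa> / of_real (u - u0)) * c u) - h') * G' / G (w * c u - h u)"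
  proof (rule psi_eq_of_product[OF T, where q=q and \<xi>="\<lambda>t. w * c t - h t" and G=G])
    show "fzz f w t = q t * G (w * c t - h t)" if "t \<in> T" for t
      using fzz[OF that] by (simp add: q_def c_def power_divide)
    show "(q has_vector_derivative q') (at u)"
      using has_vector_derivative_local_form_coefficient[OF u0_less, of \<kappa>]
      unfolding q_def[abs_def] q'_def c_def by simp
    show "((\<lambda>t. w * c t - h t) has_vector_derivative w * ((\<i> * of_real \<kappa> / of_real (u - u0)) * c u) - h') (at u)"
      unfolding c_def
      by (intro has_vector_derivative_diff has_vector_derivative_mult_right h has_vector_derivative_cpow_ik u0_less)
  qed (use G G_nz u0_less in \<open>simp_all add: q_def c_def\<close>)
  moreover have "q u \<noteq> 0" using u0_less by (simp add: q_def c_def)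
  ultimately show ?thesis by (simp add: q'_def c_def)
qed

lemma local_form_higher_derivs:
  fixes F :: "complex \<Rightarrow> complex" and h A1 A0 :: "real \<Rightarrow> complex"
  assumes V: "open V" "(w, t) \<in> V" and W: "open W" "F holomorphic_on W"
    and rep: "\<forall>(z, u)\<in>V. z * cpow_ik \<kappa> u0 u - h u \<in> W \<and>
           f z u = F (z * cpow_ik \<kappa> u0 u - h u) / of_real ((u - u0)\<^sup>2) + A1 u * z + A0 u"
  shows "fzz f w t = cpow_ik \<kappa> u0 t ^ 2 * (deriv ^^ 2) F (w * cpow_ik \<kappa> u0 t - h t) / of_real ((t - u0)\<^sup>2)"
    and "fzzz f w t = cpow_ik \<kappa> u0 t ^ 3 * (deriv ^^ 3) F (w * cpow_ik \<kappa> u0 t - h t) / of_real ((t - u0)\<^sup>2)"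
  using higher_deriv_comp_affine[OF open_slice_fst[OF V(1), of t] W, where c="cpow_ik \<kappa> u0 t" and h="h t"
      and g="\<lambda>w. f w t" and s="of_real ((t - u0)\<^sup>2)" and a="A1 t" and b="A0 t" and x=w] rep V(2)
  by (auto simp: fzz_eq fzzz_def numeral_3_eq_3)

lemma has_local_form_imp_phi_psi_equation:
  assumes V: "open V" "(z, u) \<in> V" "V \<subseteq> {(z, u). u > u0}"
    and fzz_nz: "\<forall>(z, u)\<in>V. fzz f z u \<noteq> 0"
    and "has_local_form \<kappa> u0 f V"
  shows "phi_psi_equation \<kappa> u0 f z u"
proof -
  obtain F h A1 A0 W I where W: "open W" "F holomorphic_on W" "\<forall>w\<in>W. (deriv ^^ 3) F w \<noteq> 0"
    and I: "snd ` V \<subseteq> I" "smooth_on I h"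
    and rep: "\<forall>(z, u)\<in>V. z * cpow_ik \<kappa> u0 u - h u \<in> W \<and>
           f z u = F (z * cpow_ik \<kappa> u0 u - h u) / of_real ((u - u0)^2) + A1 u * z + A0 u"
    using assms(5) unfolding has_local_form_def by blast
  define c where "c = cpow_ik \<kappa> u0"
  define F2 where "F2 = (deriv ^^ 2) F"
  define F3 where "F3 = (deriv ^^ 3) F"
  define \<xi> where "\<xi> w = w * c u - h u" for w
  define Om where "Om = {w. (w, u) \<in> V}"
  have Om: "open Om" "z \<in> Om" using open_slice_fst[OF V(1)] V(2) by (auto simp: Om_def)
  have u0_less: "u0 < u" using V(2,3) by auto
  have in_W: "\<xi> w \<in> W" if "w \<in> Om" for w using rep that by (auto simp: \<xi>_def c_def Om_def)
  have F2_nz: "F2 (\<xi> w) \<noteq> 0" and F3_nz: "F3 (\<xi> w) \<noteq> 0" if "w \<in> Om" for w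
    using fzz_nz local_form_higher_derivs(1)[OF V(1) _ W(1,2) rep, of w u] W(3) in_W that
    by (auto simp: F2_def F3_def \<xi>_def c_def Om_def)
  have phi: "phi f w u = c u * F3 (\<xi> w) / F2 (\<xi> w)" if "w \<in> Om" for w
  proof -
    define s where "s = complex_of_real ((u - u0)\<^sup>2)"
    have derivs: "fzz f w u = c u ^ 2 * F2 (\<xi> w) / s" "fzzz f w u = c u ^ 3 * F3 (\<xi> w) / s"
      using local_form_higher_derivs[OF V(1) _ W(1,2) rep, of w u] that
      by (simp_all add: Om_def F2_def F3_def \<xi>_def c_def s_def)
    have "s \<noteq> 0" using u0_less by (simp add: s_def)
    then show ?thesis
      unfolding phi_eq derivs using F2_nz[OF that]
      by (simp add: c_def field_simps power2_eq_square power3_eq_cube)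
  qed
  have "u \<in> I" using V(2) I(1) by force
  then have "h differentiable (at u)" using I(2) unfolding smooth_on_def by (metis iter_dderiv.simps(1))
  then obtain h' where h': "(h has_vector_derivative h') (at u)"
    using vector_derivative_works by blast
  define r where "r w = (2 * \<i> * of_real \<kappa> - 2) * F2 (\<xi> w) / (c u * F3 (\<xi> w))" for w
  have "of_real (u - u0) * psi f w u / phi f w u = r w + \<i> * of_real \<kappa> * w - of_real (u - u0) * h' / c u"
    if w: "w \<in> Om" for w
  proof -
    have "F3 = deriv F2" by (simp add: F2_def F3_def numeral_3_eq_3 numeral_2_eq_2)
    then have "(F2 has_field_derivative F3 (\<xi> w)) (at (\<xi> w))"
      using holomorphic_derivI[OF _ W(1) in_W[OF w], of F2 UNIV] holomorphic_higher_deriv[OF W(2,1)]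
      by (simp add: F2_def)
    from psi_of_local_form[OF open_slice_snd[OF V(1), of w] _ u0_less _ h' this[unfolded \<xi>_def c_def]]
    have "psi f w u = (2 * \<i> * of_real \<kappa> - 2) / of_real (u - u0)
        + (w * ((\<i> * of_real \<kappa> / of_real (u - u0)) * c u) - h') * F3 (\<xi> w) / F2 (\<xi> w)"
      using local_form_higher_derivs(1)[OF V(1) _ W(1,2) rep, of w] F2_nz[OF w] w
      by (simp add: Om_def F2_def \<xi>_def c_def)
    moreover have "d * ((2 * \<i> * k - 2) / d + (w * ((\<i> * k / d) * c) - h') * G3 / G2) / (c * G3 / G2)
        = (2 * \<i> * k - 2) * G2 / (c * G3) + \<i> * k * w - d * h' / c"
      if "d \<noteq> 0" "c \<noteq> 0" "G2 \<noteq> 0" "G3 \<noteq> 0" for d c G2 G3 k :: complex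
      using that by (simp add: field_simps)
    ultimately show ?thesis
      using phi[OF w] F2_nz[OF w] F3_nz[OF w] u0_less by (simp add: r_def c_def)
  qed
  moreover have "(2 * \<i> * of_real \<kappa> - 2) / phi f w u = r w" if "w \<in> Om" for w
    using that phi F2_nz F3_nz by (simp add: r_def c_def)
  moreover have "r field_differentiable at z"
  proof -
    have comp: "(\<lambda>w. G (\<xi> w)) field_differentiable at z" if "G holomorphic_on W" for G
      using has_field_derivative_comp_affine[OF that W(1) in_W[OF Om(2), unfolded \<xi>_def]]
      unfolding \<xi>_def field_differentiable_def by blast
    have "(\<lambda>w. (2 * \<i> * of_real \<kappa> - 2) * F2 (\<xi> w)) field_differentiable at z"
      using comp holomorphic_higher_deriv[OF W(2,1)]
      by (intro field_differentiable_mult field_differentiable_const) (simp add: F2_def)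
    moreover have "(\<lambda>w. c u * F3 (\<xi> w)) field_differentiable at z"
      using comp holomorphic_higher_deriv[OF W(2,1)]
      by (intro field_differentiable_mult field_differentiable_const) (simp add: F3_def)
    ultimately show ?thesis
      unfolding r_def using F3_nz[OF Om(2)] by (intro field_differentiable_divide) (auto simp: c_def)
  qed
  moreover have "\<forall>\<^sub>F w in nhds z. w \<in> Om"
    using Om by (rule eventually_nhds_in_open)
  ultimately show ?thesis
    unfolding phi_psi_equation_def
    by (intro deriv_eq_deriv_plus_linear[where r=r]) (auto elim!: eventually_mono)
qed

section \<open>The equation implies the local form\<close>

lemma has_vector_derivative_along_curve:
  assumes g: "smooth_on U g" "holomorphic_slices U g" and "(Z t, t) \<in> U"
    and Z: "(Z has_vector_derivative Z') (at t)"
  shows "((\<lambda>t. g (Z t, t)) has_vector_derivative Z' * partial_z g (Z t, t) + partial_u g (Z t, t)) (at t)"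
proof -
  let ?L = "frechet_derivative g (at (Z t, t))"
  have L: "(g has_derivative ?L) (at (Z t, t))"
    using smooth_on_has_derivative[OF g(1) assms(3)] .
  have "?L (Z', 1) = ?L (Z', 0) + ?L (0, 1)"
    using linear_add[OF has_derivative_linear[OF L], of "(Z', 0)" "(0, 1)"] by simp
  also have "\<dots> = Z' * partial_z g (Z t, t) + partial_u g (Z t, t)"
    using frechet_derivative_fst_direction[OF g assms(3)] frechet_derivative_snd_direction(1)[OF g(1) assms(3)]
    by simp
  finally show ?thesis
    using has_vector_derivative_comp_curve[OF L Z has_vector_derivative_id] by simp
qed

text \<open>Method of characteristics: by the transport equation, the derivative of the quantity
  below along each characteristic vanishes.\<close>
lemma first_order_pde_transport:
  fixes g :: "complex \<times> real \<Rightarrow> complex" and \<gamma> h :: "real \<Rightarrow> complex"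
    and \<xi> :: complex and \<kappa> u0 :: real
  defines "Z \<equiv> \<lambda>\<tau>. (\<xi> + h \<tau>) * cpow_ik (- \<kappa>) u0 \<tau>"
  assumes g: "smooth_on U g" "holomorphic_slices U g"
    and I: "convex I" "I \<subseteq> {u0<..}"
    and h: "\<And>\<tau>. \<tau> \<in> I \<Longrightarrow> (h has_vector_derivative cpow_ik \<kappa> u0 \<tau> * \<gamma> \<tau> / of_real (\<tau> - u0)) (at \<tau>)"
    and curve: "\<And>\<tau>. \<tau> \<in> I \<Longrightarrow> (Z \<tau>, \<tau>) \<in> U"
    and pde: "\<And>\<tau>. \<tau> \<in> I \<Longrightarrow> of_real (\<tau> - u0) * partial_u g (Z \<tau>, \<tau>)
        = (2 * \<i> * of_real \<kappa> - 2) * g (Z \<tau>, \<tau>) + (\<i> * of_real \<kappa> * Z \<tau> - \<gamma> \<tau>) * partial_z g (Z \<tau>, \<tau>)"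
  obtains C where "\<And>\<tau>. \<tau> \<in> I \<Longrightarrow>
    of_real ((\<tau> - u0)\<^sup>2) * cpow_ik (- \<kappa>) u0 \<tau> ^ 2 * g (Z \<tau>, \<tau>) = C"
proof -
  define ic where "ic = cpow_ik (- \<kappa>) u0"
  define Q where "Q \<tau> = of_real ((\<tau> - u0)\<^sup>2) * ic \<tau> ^ 2 * g (Z \<tau>, \<tau>)" for \<tau>
  have "(Q has_vector_derivative 0) (at \<tau>)" if \<tau>: "\<tau> \<in> I" for \<tau>
  proof -
    have u0_less: "u0 < \<tau>" using \<tau> I(2) by auto
    define d where "d = complex_of_real (\<tau> - u0)"
    have d: "d \<noteq> 0" using u0_less by (simp add: d_def)
    have c_ic: "cpow_ik \<kappa> u0 \<tau> * ic \<tau> = 1" by (simp add: ic_def cpow_ik_mult_minus)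
    define ic' where "ic' = - \<i> * of_real \<kappa> / d * ic \<tau>"
    have ic': "(ic has_vector_derivative ic') (at \<tau>)"
      using has_vector_derivative_cpow_ik[OF u0_less, of "- \<kappa>"] by (simp add: ic_def ic'_def d_def)
    define Z' where "Z' = (\<gamma> \<tau> - \<i> * of_real \<kappa> * Z \<tau>) / d"
    have "((\<lambda>\<tau>. \<xi> + h \<tau>) has_vector_derivative cpow_ik \<kappa> u0 \<tau> * \<gamma> \<tau> / d) (at \<tau>)"
      using has_vector_derivative_add[OF has_vector_derivative_const h[OF \<tau>]] by (simp add: d_def)
    from has_vector_derivative_mult[OF this ic']
    have "(Z has_vector_derivative (\<xi> + h \<tau>) * ic' + cpow_ik \<kappa> u0 \<tau> * \<gamma> \<tau> / d * ic \<tau>) (at \<tau>)"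
      unfolding Z_def ic_def .
    moreover have "(\<xi> + h \<tau>) * ic' + cpow_ik \<kappa> u0 \<tau> * \<gamma> \<tau> / d * ic \<tau> = Z'"
      using c_ic d by (simp add: Z'_def ic'_def Z_def ic_def field_simps)
    ultimately have Z': "(Z has_vector_derivative Z') (at \<tau>)" by simp
    have "((\<lambda>t. (t - u0)\<^sup>2) has_real_derivative 2 * (\<tau> - u0)) (at \<tau>)"
      by (auto intro!: derivative_eq_intros)
    from has_vector_derivative_of_real[OF this]
    have s': "((\<lambda>t. complex_of_real ((t - u0)\<^sup>2)) has_vector_derivative 2 * d) (at \<tau>)"
      by (simp add: d_def)
    have "(Q has_vector_derivative
        of_real ((\<tau> - u0)\<^sup>2) * (ic \<tau> * ic' + ic' * ic \<tau>) * g (Z \<tau>, \<tau>)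
        + of_real ((\<tau> - u0)\<^sup>2) * ic \<tau> ^ 2 * (Z' * partial_z g (Z \<tau>, \<tau>) + partial_u g (Z \<tau>, \<tau>))
        + 2 * d * ic \<tau> ^ 2 * g (Z \<tau>, \<tau>)) (at \<tau>)"
      using has_vector_derivative_mult[OF has_vector_derivative_mult[OF s' has_vector_derivative_mult[OF ic' ic']]
          has_vector_derivative_along_curve[OF g curve[OF \<tau>] Z']]
      unfolding Q_def by (simp add: power2_eq_square algebra_simps)
    moreover have "of_real ((\<tau> - u0)\<^sup>2) * (ic \<tau> * ic' + ic' * ic \<tau>) * g (Z \<tau>, \<tau>)
        + of_real ((\<tau> - u0)\<^sup>2) * ic \<tau> ^ 2 * (Z' * partial_z g (Z \<tau>, \<tau>) + partial_u g (Z \<tau>, \<tau>))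
        + 2 * d * ic \<tau> ^ 2 * g (Z \<tau>, \<tau>) = 0"
    proof -
      have sq: "complex_of_real ((\<tau> - u0)\<^sup>2) = d\<^sup>2" by (simp add: d_def)
      have gu: "partial_u g (Z \<tau>, \<tau>) = ((2 * \<i> * of_real \<kappa> - 2) * g (Z \<tau>, \<tau>)
          + (\<i> * of_real \<kappa> * Z \<tau> - \<gamma> \<tau>) * partial_z g (Z \<tau>, \<tau>)) / d"
        using pde[OF \<tau>, folded d_def] d by (simp add: field_simps)
      show ?thesis unfolding sq gu ic'_def Z'_def using d by (simp add: field_simps power2_eq_square)
    qed
    ultimately show ?thesis by simp
  qed
  then have "\<exists>C. \<forall>\<tau>\<in>I. Q \<tau> = C"
    by (intro has_derivative_zero_constant[OF I(1)])
       (auto simp: has_vector_derivative_def intro: has_derivative_at_withinI)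
  then show ?thesis using that unfolding Q_def ic_def by blast
qed

lemma characteristic_shift:
  assumes J: "open J" "J \<subseteq> {u0<..}" and \<gamma>: "Cinf_on J \<gamma>" and ab: "{a..b} \<subseteq> J"
  obtains h where "Cinf_on {a<..<b} h"
    "\<And>t. t \<in> {a<..<b} \<Longrightarrow> (h has_vector_derivative cpow_ik \<kappa> u0 t * \<gamma> t / of_real (t - u0)) (at t)"
proof -
  have "Cinf_on J (\<lambda>t. complex_of_real t - of_real u0)"
    using J(1) by (intro Cinf_on_diff Cinf_on_of_real Cinf_on_const)
  moreover have "Cinf_on J (cpow_ik \<kappa> u0)" using Cinf_on_subset[OF Cinf_on_cpow_ik J(2)] .
  ultimately have "Cinf_on J (\<lambda>t. cpow_ik \<kappa> u0 t * \<gamma> t / of_real (t - u0))"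
    using J \<gamma> by (intro Cinf_on_divide Cinf_on_mult) auto
  from Cinf_on_primitive[OF this ab] show ?thesis using that by blast
qed

lemma characteristic_tube:
  fixes c h :: "real \<Rightarrow> complex" and z0 :: complex
  assumes J: "open J" "u1 \<in> J" and c: "continuous_on J c" "\<And>t. norm (c t) = 1"
    and h: "continuous_on J h" and r: "r > 0"
  defines "tube \<equiv> \<lambda>I. {p. snd p \<in> I \<and> fst p * c (snd p) - h (snd p) \<in> ball (z0 * c u1 - h u1) r}"
  obtains I where "open I" "convex I" "u1 \<in> I" "I \<subseteq> J" "open (tube I)" "(z0, u1) \<in> tube I"
    "tube I \<subseteq> ball z0 (2 * r) \<times> I" "\<And>t. convex {\<zeta>. (\<zeta>, t) \<in> tube I}"
proof -
  define \<xi>1 where "\<xi>1 = z0 * c u1 - h u1"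
  define zs where "zs t = (\<xi>1 + h t) / c t" for t
  have c_nz: "c t \<noteq> 0" for t using c(2)[of t] by auto
  have "continuous_on J zs"
    unfolding zs_def using c h c_nz by (intro continuous_intros) auto
  then have "isCont zs u1" using J continuous_on_eq_continuous_at by blast
  moreover have "zs u1 = z0" using c_nz[of u1] by (simp add: zs_def \<xi>1_def field_simps)
  ultimately have "\<exists>d>0. \<forall>t. dist t u1 < d \<longrightarrow> dist (zs t) z0 < r"
    using r unfolding continuous_at_eps_delta by simp
  then obtain d1 where d1: "d1 > 0" "\<And>t. dist t u1 < d1 \<Longrightarrow> dist (zs t) z0 < r" by blast
  obtain d2 where d2: "d2 > 0" "ball u1 d2 \<subseteq> J" using J open_contains_ball by blast
  define I where "I = ball u1 (min d1 d2)"
  have I: "open I" "convex I" "u1 \<in> I" "I \<subseteq> J" using d1(1) d2 by (auto simp: I_def)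
  have slice: "(\<zeta>, t) \<in> tube I \<longleftrightarrow> t \<in> I \<and> \<zeta> \<in> ball (zs t) r" for \<zeta> t
  proof -
    have "\<zeta> * c t - h t - \<xi>1 = c t * (\<zeta> - zs t)" using c_nz[of t] by (simp add: zs_def field_simps)
    then have "norm (\<zeta> * c t - h t - \<xi>1) = norm (\<zeta> - zs t)" by (simp add: norm_mult c(2))
    then have "dist \<xi>1 (\<zeta> * c t - h t) = dist (zs t) \<zeta>"
      by (simp add: dist_norm norm_minus_commute)
    then show ?thesis by (simp add: tube_def \<xi>1_def[symmetric])
  qed
  have "open (tube I)"
  proof -
    have "continuous_on (UNIV \<times> I) (\<lambda>p. fst p * c (snd p) - h (snd p))"
      using continuous_on_subset[OF c(1) I(4)] continuous_on_subset[OF h I(4)]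
      by (intro continuous_intros continuous_on_compose2[where g=c and f=snd]
          continuous_on_compose2[where g=h and f=snd]) auto
    moreover have "open (UNIV \<times> I)" using I(1) by (simp add: open_Times)
    ultimately have "open ((\<lambda>p. fst p * c (snd p) - h (snd p)) -` ball \<xi>1 r \<inter> UNIV \<times> I)"
      using continuous_on_open_vimage by blast
    moreover have "tube I = (\<lambda>p. fst p * c (snd p) - h (snd p)) -` ball \<xi>1 r \<inter> UNIV \<times> I"
      by (auto simp: tube_def \<xi>1_def)
    ultimately show ?thesis by simp
  qed
  moreover have "(z0, u1) \<in> tube I" using I(3) r by (simp add: tube_def)
  moreover have "tube I \<subseteq> ball z0 (2 * r) \<times> I"
  proof clarify
    fix \<zeta> t assume "(\<zeta>, t) \<in> tube I"
    then have t: "t \<in> I" and \<zeta>: "dist (zs t) \<zeta> < r" using slice by auto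
    have "dist (zs t) z0 < r" using t d1(2) by (simp add: I_def dist_commute)
    then show "\<zeta> \<in> ball z0 (2 * r) \<and> t \<in> I"
      using \<zeta> t dist_triangle[of z0 \<zeta> "zs t"] by (simp add: dist_commute)
  qed
  moreover have "convex {\<zeta>. (\<zeta>, t) \<in> tube I}" for t
  proof -
    have "{\<zeta>. (\<zeta>, t) \<in> tube I} = (if t \<in> I then ball (zs t) r else {})"
      using slice by auto
    then show ?thesis by simp
  qed
  ultimately show ?thesis using that I by blast
qed

locale smooth_holomorphic_family =
  fixes f :: "complex \<Rightarrow> real \<Rightarrow> complex" and U :: "(complex \<times> real) set"
  assumes smooth: "smooth_on U (\<lambda>p. f (fst p) (snd p))"
    and holomorphic: "\<forall>(z, u)\<in>U. (\<lambda>w. f w u) field_differentiable (at z)"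
begin

definition f1 :: "complex \<times> real \<Rightarrow> complex" where "f1 = partial_z (\<lambda>p. f (fst p) (snd p))"

definition f2 :: "complex \<times> real \<Rightarrow> complex" where "f2 = partial_z f1"

definition f3 :: "complex \<times> real \<Rightarrow> complex" where "f3 = partial_z f2"

definition f2u :: "complex \<times> real \<Rightarrow> complex" where "f2u = partial_u f2"

lemma open_U: "open U"
  using smooth unfolding smooth_on_def by blast

lemma holomorphic_slices_f: "holomorphic_slices U (\<lambda>p. f (fst p) (snd p))"
  using holomorphic unfolding holomorphic_slices_def by auto

lemma smooth_f1: "smooth_on U f1" and holomorphic_slices_f1: "holomorphic_slices U f1"
  unfolding f1_def using smooth holomorphic_slices_f open_U
  by (auto intro: smooth_on_partial_z holomorphic_slices_partial_z)

lemma smooth_f2: "smooth_on U f2" and holomorphic_slices_f2: "holomorphic_slices U f2"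
  unfolding f2_def using smooth_f1 holomorphic_slices_f1 open_U
  by (auto intro: smooth_on_partial_z holomorphic_slices_partial_z)

lemma smooth_f3: "smooth_on U f3" and holomorphic_slices_f3: "holomorphic_slices U f3"
  unfolding f3_def using smooth_f2 holomorphic_slices_f2 open_U
  by (auto intro: smooth_on_partial_z holomorphic_slices_partial_z)

lemma smooth_f2u: "smooth_on U f2u" and holomorphic_slices_f2u: "holomorphic_slices U f2u"
  unfolding f2u_def using smooth_f2 holomorphic_slices_f2
  by (auto intro: smooth_on_partial_u holomorphic_slices_partial_u)

lemma fzz_eq_f2: "fzz f w t = f2 (w, t)"
  by (simp add: fzz_eq f2_def f1_def partial_z_def)

lemma fzzz_eq_f3: "fzzz f w t = f3 (w, t)"
  by (simp add: fzzz_def f3_def f2_def f1_def partial_z_def numeral_3_eq_3)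

lemma phi_eq_f3_f2: "phi f w t = f3 (w, t) / f2 (w, t)"
  by (simp add: phi_def fzz_eq_f2 f3_def partial_z_def)

lemma psi_eq_f2u_f2: "psi f w t = f2u (w, t) / f2 (w, t)"
  by (simp add: psi_def fzz_eq_f2 f2u_def partial_u_def)

lemma has_field_derivative_f:
  "(w, t) \<in> U \<Longrightarrow> ((\<lambda>w. f w t) has_field_derivative f1 (w, t)) (at w)"
  using has_field_derivative_partial_z[OF holomorphic_slices_f] by (simp add: f1_def)

lemma has_field_derivative_f1:
  "(w, t) \<in> U \<Longrightarrow> ((\<lambda>w. f1 (w, t)) has_field_derivative f2 (w, t)) (at w)"
  using has_field_derivative_partial_z[OF holomorphic_slices_f1] by (simp add: f2_def)

lemma has_field_derivative_f2:
  "(w, t) \<in> U \<Longrightarrow> ((\<lambda>w. f2 (w, t)) has_field_derivative f3 (w, t)) (at w)"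
  using has_field_derivative_partial_z[OF holomorphic_slices_f2] by (simp add: f3_def)

lemma f_minus_second_primitive_affine:
  assumes S: "convex S" "\<And>x. x \<in> S \<Longrightarrow> (x, t) \<in> U" "x0 \<in> S" "\<zeta> \<in> S"
    and F: "\<And>x. x \<in> S \<Longrightarrow> (F has_field_derivative F1 (x * c - h)) (at (x * c - h))"
      "\<And>x. x \<in> S \<Longrightarrow> (F1 has_field_derivative T (x * c - h)) (at (x * c - h))"
    and f2_eq: "\<And>x. x \<in> S \<Longrightarrow> f2 (x, t) = c ^ 2 * T (x * c - h) / s"
  shows "f \<zeta> t - F (\<zeta> * c - h) / s
    = f x0 t - F (x0 * c - h) / s + (f1 (x0, t) - c * F1 (x0 * c - h) / s) * (\<zeta> - x0)"
proof -
  have affine: "((\<lambda>x. x * c - h) has_field_derivative c) (at x)" for x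
    by (auto intro!: derivative_eq_intros)
  define E1 where "E1 x = f1 (x, t) - c * F1 (x * c - h) / s" for x
  have E: "((\<lambda>x. f x t - F (x * c - h) / s) has_field_derivative E1 x) (at x)" if "x \<in> S" for x
    using DERIV_diff[OF has_field_derivative_f[OF S(2)[OF that]]
        DERIV_cdivide[OF DERIV_chain2[OF F(1)[OF that] affine], of s]]
    by (simp add: E1_def mult.commute)
  have "(E1 has_field_derivative 0) (at x)" if "x \<in> S" for x
  proof -
    have "(E1 has_field_derivative f2 (x, t) - c * (T (x * c - h) * c) / s) (at x)"
      using DERIV_diff[OF has_field_derivative_f1[OF S(2)[OF that]]
          DERIV_cdivide[OF DERIV_cmult[OF DERIV_chain2[OF F(2)[OF that] affine], of c], of s]]
      unfolding E1_def by simp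
    then show ?thesis using f2_eq[OF that] by (simp add: power2_eq_square mult_ac)
  qed
  from zero_second_derivative_imp_affine[OF S(1,3,4) E this] show ?thesis by (simp add: E1_def)
qed

lemma pde_of_phi_psi_equation:
  assumes eq: "\<forall>(z, u)\<in>U. phi_psi_equation \<kappa> u0 f z u"
    and nz: "\<And>p. p \<in> U \<Longrightarrow> f2 p \<noteq> 0" "\<And>p. p \<in> U \<Longrightarrow> f3 p \<noteq> 0"
    and box: "ball z0 R \<times> J \<subseteq> U" and J: "open J" and "R > 0"
  obtains c0 where "Cinf_on J c0"
    and "\<And>w t. w \<in> ball z0 R \<Longrightarrow> t \<in> J \<Longrightarrow> of_real (t - u0) * f2u (w, t)
           = (2 * \<i> * of_real \<kappa> - 2) * f2 (w, t) + (\<i> * of_real \<kappa> * w - c0 t) * f3 (w, t)"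
proof -
  define H where "H w t = (of_real (t - u0) * f2u (w, t) - (2 * \<i> * of_real \<kappa> - 2) * f2 (w, t)) / f3 (w, t)
    - \<i> * of_real \<kappa> * w" for w t
  have H_const: "H w t = H z0 t" if w: "w \<in> ball z0 R" and t: "t \<in> J" for w t
  proof -
    define Lf where "Lf w = of_real (t - u0) * psi f w t / phi f w t" for w
    define Rf where "Rf w = (2 * \<i> * of_real \<kappa> - 2) / phi f w t" for w
    have in_U: "(x, t) \<in> U" if "x \<in> ball z0 R" for x using box that t by blast
    have H_eq: "H x t = Lf x - Rf x - \<i> * of_real \<kappa> * x" if "x \<in> ball z0 R" for x
      using nz[OF in_U[OF that]] unfolding H_def Lf_def Rf_def phi_eq_f3_f2 psi_eq_f2u_f2
      by (simp add: field_simps)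
    have "Lf w - Rf w - \<i> * of_real \<kappa> * w = Lf z0 - Rf z0 - \<i> * of_real \<kappa> * z0"
    proof (rule affine_difference_of_deriv_eq[OF convex_ball _ _ _ w])
      fix x assume x: "x \<in> ball z0 R"
      have diff: "(\<lambda>w. g (w, t)) field_differentiable at x" if "holomorphic_slices U g" for g
        using holomorphic_slicesD[OF that in_U[OF x]] .
      note slices = diff[OF holomorphic_slices_f2] diff[OF holomorphic_slices_f3]
        diff[OF holomorphic_slices_f2u] nz[OF in_U[OF x]]
      show "Lf field_differentiable at x"
        unfolding Lf_def phi_eq_f3_f2 psi_eq_f2u_f2 using slices
        by (intro field_differentiable_divide field_differentiable_mult field_differentiable_const) auto
      show "Rf field_differentiable at x"
        unfolding Rf_def phi_eq_f3_f2 using slices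
        by (intro field_differentiable_divide field_differentiable_const) auto
      show "deriv Lf x = deriv Rf x + \<i> * of_real \<kappa>"
        using eq in_U[OF x] unfolding Lf_def Rf_def phi_psi_equation_def by auto
    qed (use \<open>R > 0\<close> in simp)
    then show ?thesis using H_eq w \<open>R > 0\<close> by simp
  qed
  define c0 where "c0 t = - H z0 t" for t
  have "Cinf_on J c0"
  proof -
    have z0_in: "(z0, t) \<in> U" if "t \<in> J" for t using box that \<open>R > 0\<close> by auto
    have curve: "Cinf_on J (\<lambda>t. g (z0, t))" if "smooth_on U g" for g
      using Cinf_on_comp_curve[OF J Cinf_on_const[OF J] Cinf_on_ident[OF J] z0_in that] .
    have "Cinf_on J (\<lambda>t. complex_of_real t - of_real u0)"
      using J by (intro Cinf_on_diff Cinf_on_of_real Cinf_on_const)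
    then have "Cinf_on J (\<lambda>t. (of_real (t - u0) * f2u (z0, t) - (2 * \<i> * of_real \<kappa> - 2) * f2 (z0, t))
        / f3 (z0, t) - \<i> * of_real \<kappa> * z0)"
      using J curve[OF smooth_f2u] curve[OF smooth_f2] curve[OF smooth_f3] nz(2)[OF z0_in]
      by (intro Cinf_on_diff Cinf_on_divide Cinf_on_mult Cinf_on_const) auto
    then show ?thesis
      unfolding c0_def H_def using Cinf_on_bounded_linear[OF bounded_linear_minus[OF bounded_linear_ident] J]
      by blast
  qed
  moreover have "of_real (t - u0) * f2u (w, t)
      = (2 * \<i> * of_real \<kappa> - 2) * f2 (w, t) + (\<i> * of_real \<kappa> * w - c0 t) * f3 (w, t)"
    if "w \<in> ball z0 R" "t \<in> J" for w t
  proof -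
    have "H w t = - c0 t" using H_const[OF that] by (simp add: c0_def)
    moreover have "f3 (w, t) \<noteq> 0" using nz(2) box that by blast
    ultimately show ?thesis unfolding H_def by (simp add: field_simps)
  qed
  ultimately show ?thesis using that by blast
qed

text \<open>The integration constants are read off along the section \<open>t \<mapsto> (zs t, t)\<close>, which makes
  them smooth in \<open>t\<close>.\<close>
lemma has_local_form_of_f2:
  fixes \<kappa> u0 :: real
  defines "c \<equiv> cpow_ik \<kappa> u0" and "s \<equiv> \<lambda>t. complex_of_real ((t - u0)\<^sup>2)"
  assumes V: "open V" "V \<subseteq> U" "\<And>t. convex {\<zeta>. (\<zeta>, t) \<in> V}"
    and I: "open I" "snd ` V \<subseteq> I" "I \<subseteq> {u0<..}"
    and W: "open W" "convex W" "T holomorphic_on W" "\<And>\<xi>. \<xi> \<in> W \<Longrightarrow> deriv T \<xi> \<noteq> 0"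
    and h: "Cinf_on I h" and into_W: "\<And>\<zeta> t. (\<zeta>, t) \<in> V \<Longrightarrow> \<zeta> * c t - h t \<in> W"
    and sec: "Cinf_on I zs" "\<And>t. t \<in> I \<Longrightarrow> (zs t, t) \<in> V" "\<And>t. zs t * c t - h t = \<xi>1"
    and f2_eq: "\<And>\<zeta> t. (\<zeta>, t) \<in> V \<Longrightarrow> f2 (\<zeta>, t) = c t ^ 2 * T (\<zeta> * c t - h t) / s t"
  shows "has_local_form \<kappa> u0 f V"
proof -
  obtain F1 where F1: "F1 holomorphic_on W" "\<And>x. x \<in> W \<Longrightarrow> (F1 has_field_derivative T x) (at x)"
    using holomorphic_convex_primitive_at[OF W(2,1,3)] by blast
  obtain F where F: "F holomorphic_on W" "\<And>x. x \<in> W \<Longrightarrow> (F has_field_derivative F1 x) (at x)"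
    using holomorphic_convex_primitive_at[OF W(2,1) F1(1)] by blast
  have dF: "deriv F x = F1 x" if "x \<in> W" for x
    using DERIV_imp_deriv[OF F(2)[OF that]] .
  have ddF: "deriv (deriv F) x = T x" if "x \<in> W" for x
    using deriv_eq_on_open[OF W(1) that dF F1(2)[OF that]] .
  have "deriv (deriv (deriv F)) x = deriv T x" if "x \<in> W" for x
    using deriv_eq_on_open[OF W(1) that ddF holomorphic_derivI[OF W(3,1) that, where T=UNIV]] by simp
  then have F3: "\<forall>x\<in>W. (deriv ^^ 3) F x \<noteq> 0" using W(4) by (simp add: numeral_3_eq_3)
  have s_nz: "s t \<noteq> 0" if "t \<in> I" for t using that I(3) by (auto simp: s_def)
  define A1 where "A1 t = f1 (zs t, t) - c t * F1 \<xi>1 / s t" for t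
  define A0 where "A0 t = f (zs t) t - F \<xi>1 / s t - A1 t * zs t" for t
  have rep: "f \<zeta> t = F (\<zeta> * c t - h t) / s t + A1 t * \<zeta> + A0 t" if \<zeta>t: "(\<zeta>, t) \<in> V" for \<zeta> t
  proof -
    define S where "S = {\<zeta>. (\<zeta>, t) \<in> V}"
    have t: "t \<in> I" using \<zeta>t I(2) by force
    have "f \<zeta> t - F (\<zeta> * c t - h t) / s t
        = f (zs t) t - F (zs t * c t - h t) / s t + (f1 (zs t, t) - c t * F1 (zs t * c t - h t) / s t) * (\<zeta> - zs t)"
    proof (rule f_minus_second_primitive_affine[OF V(3)[of t, folded S_def]])
      show "(x, t) \<in> U" if "x \<in> S" for x using that V(2) by (auto simp: S_def)
      show "zs t \<in> S" "\<zeta> \<in> S" using sec(2)[OF t] \<zeta>t by (simp_all add: S_def)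
      show "(F has_field_derivative F1 (x * c t - h t)) (at (x * c t - h t))"
        "(F1 has_field_derivative T (x * c t - h t)) (at (x * c t - h t))"
        "f2 (x, t) = c t ^ 2 * T (x * c t - h t) / s t" if "x \<in> S" for x
        using F(2) F1(2) into_W f2_eq that by (simp_all add: S_def)
    qed
    then show ?thesis unfolding sec(3) using s_nz[OF t] by (simp add: A0_def A1_def field_simps)
  qed
  have smooth_I: "Cinf_on I A1" "Cinf_on I A0"
  proof -
    have on_U: "(zs t, t) \<in> U" if "t \<in> I" for t using sec(2)[OF that] V(2) by blast
    have curve: "Cinf_on I (\<lambda>t. g (zs t, t))" if "smooth_on U g" for g
      using Cinf_on_comp_curve[OF I(1) sec(1) Cinf_on_ident[OF I(1)] on_U that] .
    have c: "Cinf_on I c"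
      using Cinf_on_subset[OF Cinf_on_cpow_ik I(3)] by (simp add: c_def)
    have "Cinf_on I (\<lambda>t. complex_of_real t - of_real u0)"
      using I(1) by (intro Cinf_on_diff Cinf_on_of_real Cinf_on_const)
    from Cinf_on_mult[OF I(1) this this] have s: "Cinf_on I s"
      unfolding s_def by (simp add: power2_eq_square)
    show "Cinf_on I A1"
      unfolding A1_def using I(1) curve[OF smooth_f1] c s s_nz
      by (intro Cinf_on_diff Cinf_on_divide Cinf_on_mult Cinf_on_const) auto
    then show "Cinf_on I A0"
      unfolding A0_def using I(1) curve[OF smooth] s s_nz sec(1)
      by (intro Cinf_on_diff Cinf_on_divide Cinf_on_mult Cinf_on_const) auto
  qed
  show ?thesis
    unfolding has_local_form_def
  proof (intro exI conjI)
    show "smooth_on I h" "smooth_on I A1" "smooth_on I A0"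
      using Cinf_on_imp_smooth_on[OF I(1)] h smooth_I by blast+
    show "\<forall>(z, u)\<in>V. z * cpow_ik \<kappa> u0 u - h u \<in> W \<and>
        f z u = F (z * cpow_ik \<kappa> u0 u - h u) / of_real ((u - u0)\<^sup>2) + A1 u * z + A0 u"
      using into_W rep by (auto simp: c_def s_def)
  qed (use W(1) F(1) F3 I(1,2) in blast)+
qed

lemma f2_along_characteristics:
  fixes \<kappa> u0 u1 :: real and \<gamma> h :: "real \<Rightarrow> complex"
  defines "c \<equiv> cpow_ik \<kappa> u0" and "ic \<equiv> cpow_ik (- \<kappa>) u0"
    and "s \<equiv> \<lambda>t. complex_of_real ((t - u0)\<^sup>2)"
  defines "T \<equiv> \<lambda>\<xi>. s u1 * ic u1 ^ 2 * f2 ((\<xi> + h u1) * ic u1, u1)"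
  assumes I: "convex I" "I \<subseteq> {u0<..}" "u1 \<in> I"
    and h: "\<And>t. t \<in> I \<Longrightarrow> (h has_vector_derivative c t * \<gamma> t / of_real (t - u0)) (at t)"
    and V: "V \<subseteq> U" "\<And>\<zeta> t. (\<zeta>, t) \<in> V \<Longrightarrow> t \<in> I \<and> \<zeta> * c t - h t \<in> W"
      "\<And>\<xi> t. \<xi> \<in> W \<Longrightarrow> t \<in> I \<Longrightarrow> ((\<xi> + h t) * ic t, t) \<in> V"
    and pde: "\<And>w t. (w, t) \<in> V \<Longrightarrow> of_real (t - u0) * f2u (w, t)
      = (2 * \<i> * of_real \<kappa> - 2) * f2 (w, t) + (\<i> * of_real \<kappa> * w - \<gamma> t) * f3 (w, t)"
    and f3_nz: "\<And>p. p \<in> U \<Longrightarrow> f3 p \<noteq> 0"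
  shows "T holomorphic_on W" and "\<And>\<xi>. \<xi> \<in> W \<Longrightarrow> deriv T \<xi> \<noteq> 0"
    and "\<And>\<zeta> t. (\<zeta>, t) \<in> V \<Longrightarrow> f2 (\<zeta>, t) = c t ^ 2 * T (\<zeta> * c t - h t) / s t"
proof -
  have c_ic: "c t * ic t = 1" for t by (simp add: c_def ic_def cpow_ik_mult_minus)
  have T_deriv: "(T has_field_derivative s u1 * ic u1 ^ 2 * (ic u1 * f3 ((\<xi> + h u1) * ic u1, u1))) (at \<xi>)"
    if "\<xi> \<in> W" for \<xi>
  proof -
    have "((\<lambda>\<xi>. (\<xi> + h u1) * ic u1) has_field_derivative ic u1) (at \<xi>)"
      by (auto intro!: derivative_eq_intros)
    from DERIV_chain2[OF has_field_derivative_f2[OF V(1)[THEN subsetD, OF V(3)[OF that I(3)]]] this]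
    show ?thesis unfolding T_def by (auto intro!: derivative_eq_intros simp: mult.commute)
  qed
  show "T holomorphic_on W"
    unfolding holomorphic_on_def field_differentiable_def
    using T_deriv by (blast intro: has_field_derivative_at_within)
  show "deriv T \<xi> \<noteq> 0" if "\<xi> \<in> W" for \<xi>
    using DERIV_imp_deriv[OF T_deriv[OF that]] f3_nz[OF V(1)[THEN subsetD, OF V(3)[OF that I(3)]]]
      I(2,3) by (auto simp: s_def ic_def)
  show "f2 (\<zeta>, t) = c t ^ 2 * T (\<zeta> * c t - h t) / s t" if \<zeta>t: "(\<zeta>, t) \<in> V" for \<zeta> t
  proof -
    define \<xi> where "\<xi> = \<zeta> * c t - h t"
    have \<xi>: "\<xi> \<in> W" and t: "t \<in> I" using V(2)[OF \<zeta>t] by (auto simp: \<xi>_def)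
    obtain C where C: "\<And>\<tau>. \<tau> \<in> I \<Longrightarrow> s \<tau> * ic \<tau> ^ 2 * f2 ((\<xi> + h \<tau>) * ic \<tau>, \<tau>) = C"
    proof (rule first_order_pde_transport[OF smooth_f2 holomorphic_slices_f2 I(1,2),
          where h=h and \<gamma>=\<gamma> and \<xi>=\<xi> and \<kappa>=\<kappa>])
      show "(h has_vector_derivative cpow_ik \<kappa> u0 \<tau> * \<gamma> \<tau> / of_real (\<tau> - u0)) (at \<tau>)"
        if "\<tau> \<in> I" for \<tau> using h that by (simp add: c_def)
      show "((\<xi> + h \<tau>) * cpow_ik (- \<kappa>) u0 \<tau>, \<tau>) \<in> U" if "\<tau> \<in> I" for \<tau>
        using V(1) V(3)[OF \<xi> that] by (auto simp: ic_def)
      show "of_real (\<tau> - u0) * partial_u f2 ((\<xi> + h \<tau>) * cpow_ik (- \<kappa>) u0 \<tau>, \<tau>)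
          = (2 * \<i> * of_real \<kappa> - 2) * f2 ((\<xi> + h \<tau>) * cpow_ik (- \<kappa>) u0 \<tau>, \<tau>)
            + (\<i> * of_real \<kappa> * ((\<xi> + h \<tau>) * cpow_ik (- \<kappa>) u0 \<tau>) - \<gamma> \<tau>)
              * partial_z f2 ((\<xi> + h \<tau>) * cpow_ik (- \<kappa>) u0 \<tau>, \<tau>)" if "\<tau> \<in> I" for \<tau>
        using pde[OF V(3)[OF \<xi> that]] by (simp add: f2u_def f3_def ic_def)
    qed (auto simp: s_def ic_def)
    have "(\<xi> + h t) * ic t = \<zeta>" using c_ic[of t] by (simp add: \<xi>_def algebra_simps)
    then have transported: "s t * ic t ^ 2 * f2 (\<zeta>, t) = T \<xi>"
      using C[OF t] C[OF I(3)] by (simp add: T_def)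
    have "s t * f2 (\<zeta>, t) = (c t * ic t) ^ 2 * (s t * f2 (\<zeta>, t))" using c_ic[of t] by simp
    also have "\<dots> = c t ^ 2 * (s t * ic t ^ 2 * f2 (\<zeta>, t))" by (simp add: power_mult_distrib mult_ac)
    finally have "s t * f2 (\<zeta>, t) = c t ^ 2 * T \<xi>" unfolding transported .
    moreover have "s t \<noteq> 0" using I(2) t by (auto simp: s_def)
    ultimately show ?thesis by (simp add: \<xi>_def field_simps)
  qed
qed

lemma has_local_form_of_phi_psi_equation:
  assumes eq: "\<forall>(z, u)\<in>U. phi_psi_equation \<kappa> u0 f z u"
    and U_sub: "U \<subseteq> {(z, u). u > u0}"
    and fzz_nz: "\<forall>(z, u)\<in>U. fzz f z u \<noteq> 0" and fzzz_nz: "\<forall>(z, u)\<in>U. fzzz f z u \<noteq> 0"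
    and p: "(z0, u1) \<in> U"
  shows "\<exists>V. open V \<and> (z0, u1) \<in> V \<and> V \<subseteq> U \<and> has_local_form \<kappa> u0 f V"
proof -
  define c where "c = cpow_ik \<kappa> u0"
  define ic where "ic = cpow_ik (- \<kappa>) u0"
  define s where "s t = complex_of_real ((t - u0)\<^sup>2)" for t
  have c_ic: "c t * ic t = 1" for t by (simp add: c_def ic_def cpow_ik_mult_minus)
  have f2_nz: "f2 q \<noteq> 0" and f3_nz: "f3 q \<noteq> 0" if "q \<in> U" for q
    using fzz_nz fzzz_nz that by (auto simp: fzz_eq_f2 fzzz_eq_f3)
  obtain e where e: "e > 0" "cball z0 e \<times> cball u1 e \<subseteq> U"
    using open_contains_cball_Times[OF open_U p] by blast
  define J where "J = ball u1 e"
  have box: "ball z0 e \<times> J \<subseteq> U" using e(2) by (auto simp: J_def)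
  have J_u0: "t \<in> {u0<..}" if "t \<in> J" for t
  proof -
    have "(z0, t) \<in> U" using box e(1) that by auto
    then show ?thesis using U_sub by auto
  qed
  have J: "open J" "J \<subseteq> {u0<..}" using J_u0 by (auto simp: J_def)
  obtain c0 where c0: "Cinf_on J c0"
    and pde: "\<And>w t. w \<in> ball z0 e \<Longrightarrow> t \<in> J \<Longrightarrow> of_real (t - u0) * f2u (w, t)
       = (2 * \<i> * of_real \<kappa> - 2) * f2 (w, t) + (\<i> * of_real \<kappa> * w - c0 t) * f3 (w, t)"
    using pde_of_phi_psi_equation[OF eq f2_nz f3_nz box J(1) e(1)] by blast
  define J2 where "J2 = {u1 - e / 2<..<u1 + e / 2}"
  have "{u1 - e / 2..u1 + e / 2} \<subseteq> J" using e(1) by (auto simp: J_def dist_real_def)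
  from characteristic_shift[OF J(1,2) c0 this] obtain h where h: "Cinf_on J2 h"
    "\<And>t. t \<in> J2 \<Longrightarrow> (h has_vector_derivative c t * c0 t / of_real (t - u0)) (at t)"
    unfolding J2_def c_def by blast
  have c: "Cinf_on J c" "Cinf_on J ic"
    using Cinf_on_subset[OF Cinf_on_cpow_ik J(2)] by (auto simp: c_def ic_def)
  have J2: "open J2" "u1 \<in> J2" "J2 \<subseteq> J" using e(1) by (auto simp: J2_def J_def dist_real_def)
  define \<xi>1 where "\<xi>1 = z0 * c u1 - h u1"
  define W where "W = ball \<xi>1 (e / 2)"
  define tube where "tube I = {p. snd p \<in> I \<and> fst p * c (snd p) - h (snd p) \<in> W}" for I
  obtain I where I: "open I" "convex I" "u1 \<in> I" "I \<subseteq> J2" and V: "open (tube I)" "(z0, u1) \<in> tube I"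
    "tube I \<subseteq> ball z0 (2 * (e / 2)) \<times> I" "\<And>t. convex {\<zeta>. (\<zeta>, t) \<in> tube I}"
    using characteristic_tube[OF J2(1,2) Cinf_on_imp_continuous_on[OF Cinf_on_subset[OF c(1) J2(3)]] _
        Cinf_on_imp_continuous_on[OF h(1)], of "e / 2" z0] e(1)
    unfolding tube_def W_def \<xi>1_def c_def by auto
  define V where "V = tube I"
  have V_box: "V \<subseteq> ball z0 e \<times> J" using V(3) I(4) J2(3) by (auto simp: V_def)
  then have V_U: "V \<subseteq> U" using box by blast
  have I_u0: "I \<subseteq> {u0<..}" using I(4) J2(3) J(2) by blast
  have into_V: "((\<xi> + h \<tau>) * ic \<tau>, \<tau>) \<in> V" if "\<xi> \<in> W" "\<tau> \<in> I" for \<xi> \<tau>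
  proof -
    have "(\<xi> + h \<tau>) * ic \<tau> * c \<tau> - h \<tau> = \<xi>" using c_ic[of \<tau>] by (simp add: algebra_simps)
    then show ?thesis using that by (simp add: V_def tube_def)
  qed
  define T where "T \<xi> = s u1 * ic u1 ^ 2 * f2 ((\<xi> + h u1) * ic u1, u1)" for \<xi>
  have V_char: "t \<in> I \<and> \<zeta> * c t - h t \<in> W" if "(\<zeta>, t) \<in> V" for \<zeta> t
    using that by (auto simp: V_def tube_def)
  have pde_V: "of_real (t - u0) * f2u (w, t)
      = (2 * \<i> * of_real \<kappa> - 2) * f2 (w, t) + (\<i> * of_real \<kappa> * w - c0 t) * f3 (w, t)"
    if "(w, t) \<in> V" for w t using pde V_box that by blast
  have h_I: "(h has_vector_derivative c t * c0 t / of_real (t - u0)) (at t)" if "t \<in> I" for t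
    using h(2) I(4) that by blast
  note f2_V = f2_along_characteristics[OF I(2) I_u0 I(3), of h \<kappa> c0 V W, folded c_def ic_def s_def,
      OF h_I V_U V_char into_V pde_V f3_nz, folded T_def]
  moreover have "Cinf_on I (\<lambda>t. (\<xi>1 + h t) * ic t)"
  proof -
    have "I \<subseteq> J" using I(4) J2(3) by blast
    then have "Cinf_on I ic" "Cinf_on I h" using Cinf_on_subset c(2) h(1) I(4) by blast+
    then show ?thesis using I(1) by (intro Cinf_on_mult Cinf_on_add Cinf_on_const)
  qed
  moreover have "(\<xi>1 + h t) * ic t * c t - h t = \<xi>1" for t
    using c_ic[of t] by (simp add: algebra_simps)
  moreover have "\<xi>1 \<in> W" using e(1) by (simp add: W_def)
  ultimately have "has_local_form \<kappa> u0 f V"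
    using f2_V
  proof (intro has_local_form_of_f2[where I=I and W=W and T=T and h=h])
    show "snd ` V \<subseteq> I" "\<And>\<zeta> t. (\<zeta>, t) \<in> V \<Longrightarrow> \<zeta> * cpow_ik \<kappa> u0 t - h t \<in> W"
      by (auto simp: V_def tube_def c_def)
    show "\<And>t. t \<in> I \<Longrightarrow> ((\<xi>1 + h t) * ic t, t) \<in> V"
      using into_V \<open>\<xi>1 \<in> W\<close> by blast
  qed (use V(1,4) V_U I(1) I_u0 W_def f2_V Cinf_on_subset[OF h(1) I(4)] in \<open>auto simp: V_def c_def s_def\<close>)
  then show ?thesis using V(1,2) V_U by (auto simp: V_def)
qed

end

theorem mainTheorem7:
  fixes \<kappa> u0 :: real
    and f :: "complex \<Rightarrow> real \<Rightarrow> complex"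
    and U :: "(complex \<times> real) set"
  assumes U_open: "open U" and U_conn: "connected U"
    and U_sub: "U \<subseteq> {(z, u). u > u0}"
    and f_smooth: "smooth_on U (\<lambda>p. f (fst p) (snd p))"
    and f_hol: "\<forall>(z, u)\<in>U. (\<lambda>w. f w u) field_differentiable (at z)"
    and f_zz: "\<forall>(z, u)\<in>U. fzz f z u \<noteq> 0"
    and f_zzz: "\<forall>(z, u)\<in>U. fzzz f z u \<noteq> 0"
  shows "(\<forall>(z, u)\<in>U.
            deriv (\<lambda>w. of_real (u - u0) * psi f w u / phi f w u) z
          = deriv (\<lambda>w. (2 * \<i> * of_real \<kappa> - 2) / phi f w u) z + \<i> * of_real \<kappa>)
     \<longleftrightarrow>
     (\<forall>p\<in>U. \<exists>V. open V \<and> p \<in> V \<and> V \<subseteq> U \<and>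
        (\<exists>F h A1 A0 W I.
           open W \<and> F holomorphic_on W \<and> (\<forall>w\<in>W. (deriv ^^ 3) F w \<noteq> 0) \<and>
           open I \<and> snd ` V \<subseteq> I \<and>
           smooth_on I (h :: real \<Rightarrow> complex) \<and> smooth_on I (A1 :: real \<Rightarrow> complex) \<and>
           smooth_on I (A0 :: real \<Rightarrow> complex) \<and>
           (\<forall>(z, u)\<in>V. z * cpow_ik \<kappa> u0 u - h u \<in> W \<and>
              f z u = F (z * cpow_ik \<kappa> u0 u - h u) / of_real ((u - u0)^2)
                      + A1 u * z + A0 u)))"
proof -
  interpret smooth_holomorphic_family f U
    using f_smooth f_hol by unfold_locales
  have "(\<forall>(z, u)\<in>U. phi_psi_equation \<kappa> u0 f z u)
    \<longleftrightarrow> (\<forall>p\<in>U. \<exists>V. open V \<and> p \<in> V \<and> V \<subseteq> U \<and> has_local_form \<kappa> u0 f V)"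
  proof
    assume "\<forall>(z, u)\<in>U. phi_psi_equation \<kappa> u0 f z u"
    then show "\<forall>p\<in>U. \<exists>V. open V \<and> p \<in> V \<and> V \<subseteq> U \<and> has_local_form \<kappa> u0 f V"
      using has_local_form_of_phi_psi_equation[OF _ U_sub f_zz f_zzz] by auto
  next
    assume local: "\<forall>p\<in>U. \<exists>V. open V \<and> p \<in> V \<and> V \<subseteq> U \<and> has_local_form \<kappa> u0 f V"
    show "\<forall>(z, u)\<in>U. phi_psi_equation \<kappa> u0 f z u"
    proof clarify
      fix z u assume "(z, u) \<in> U"
      then obtain V where V: "open V" "(z, u) \<in> V" "V \<subseteq> U" "has_local_form \<kappa> u0 f V"
        using local by blast
      show "phi_psi_equation \<kappa> u0 f z u"
        using has_local_form_imp_phi_psi_equation[OF V(1,2) _ _ V(4)] V(3) U_sub f_zz by blast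
    qed
  qed
  then show ?thesis unfolding phi_psi_equation_def has_local_form_def .
qed

end
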